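(* Let $\hbar_1\in[-1,1]\setminus\{0\}$ and let $\hbar\in[-1,1]$ have the same sign as $\hbar_1$. Let $\delta_1,\delta_2\in(0,1)$ satisfy $\hbar(1-\delta_1)=\hbar_1(1-\delta_2)$. Then $F$ restricts to a diffeomorphism $F:\tilde V_{\delta_1}\to\tilde V_{\delta_2}$ with $|\det d_qF|=(\hbar/\hbar_1)^{n|l|}$ for all $q\in\tilde V_{\delta_1}$ (here $|l|$ is the number of edges of $l$ and $d_qF$ is viewed as an endomorphism of $(\mathbb{R}^n)^m$). Moreover, if $q\in G^m$ and $\xi\in(\mathbb{R}^n)^l$ are such that $q+tS^{ml}(\hbar_1\xi)\in\tilde V_{\delta_1}$ for all $t\in[0,1]$, then $$F(q+S^{ml}(\hbar_1\xi))=F(q)+S^{ml}(\hbar\xi).$$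
   Context: Fix integers $n,D\ge1$. $G=\mathbb{T}^n=\mathbb{R}^n/\mathbb{Z}^n$; for a finite set $S$ and $x\in(\mathbb{R}^n)^S$, $[x]\in G^S$ is its class mod $(\mathbb{Z}^n)^S$; for $q\in G^S$, $X\in(\mathbb{R}^n)^S$, $q+X:=q+[X]$. $G^S$ carries normalized Haar measure. Lattices. A lattice is a finite set $l\subseteq\mathbb{R}^D\times\mathbb{R}^D$ of edges $e=(x,y)$ with $x<y$ lexicographically, distinct edges meeting at most at endpoints; $d_e=\|y-x\|$. $l\le m$ means every $e=(x_1,x_2)\in l$ is subdivided in $m$: there are $N\ge0$, $0<t_1<\dots<t_N<1$ with $y_0=x_1$, $y_s=(1-t_s)x_1+t_sx_2$, $y_{N+1}=x_2$, and all pieces $e_s=(y_{s-1},y_s)\in m$. For $R\in\mathbb{N}$, $l^R$ is obtained by subdividing every edge of $l$ into $R$ edges of equal length. For $l\le m$, $\gamma^{\mathrm{conf}}_{lm}:G^m\to G^l$, $\gamma^{\mathrm{conf}}_{lm}(q)_e=\sum_sq_{e_s}$; the linear map $S^{ml}:(\mathbb{R}^n)^l\to(\mathbb{R}^n)^m$ is $S^{ml}(\xi)_{e_s}=\frac{d_{e_s}}{d_e}\xi_e$ on pieces $e_s$ of $e\in l$ and $0$ on edges of $m$ that are not pieces of edges of $l$. Fix a lattice $l$, $R\in\mathbb{N}$, and a lattice $m$ obtained from $l^R$ by subdivisions only. For each $e\in l$ choose one piece $e'\in l^R$ of $e$ and let $\chi_{ll^R}:G^{l^R}\to G^l$, $\chi_{ll^R}(q)_e=q_{e'}$;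 let $\varphi:=\chi_{ll^R}\circ\gamma^{\mathrm{conf}}_{l^Rm}:G^m\to G^l$ (a smooth group homomorphism with $\varphi[S^{ml}(X)]=[X/R]$). For $\delta\ge0$ let $U_\delta:=\{\xi\in(\mathbb{R}^n)^l:\xi_e\in(-\tfrac12+\tfrac12\delta,\tfrac12-\tfrac12\delta)^n\ \forall e\in l\}$, $V_\delta:=\{[\xi]:\xi\in U_\delta\}\subseteq G^l$ and $\tilde V_\delta:=\varphi^{-1}(V_\delta)\subseteq G^m$. Define $\underline\varphi:\tilde V_0\to U_0$ by $\underline\varphi(q)=\xi$ where $\xi\in U_0$ is the unique element with $\varphi(q)=[\xi]$. Given $\hbar_1,\hbar$ as in the claim, define $F:\tilde V_0\to G^m$ by $F(q):=q+R\big(\frac{\hbar}{\hbar_1}-1\big)S^{ml}(\underline\varphi(q))$. *)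

theory Defs
  imports "HOL-Analysis.Analysis"
begin

type_synonym 'd pt = "real ^ 'd"
type_synonym 'd edge = "'d pt \<times> 'd pt"

text \<open>Configurations: an element of (R^n)^S is represented by a function on edges
  (only its values on S matter). A point of the torus G = T^n = R^n/Z^n is represented
  by its unique representative in [0,1)^n; an element of G^S by a function that takes
  such representatives on S and is 0 off S.\<close>
type_synonym ('d,'n) cfg = "'d edge \<Rightarrow> real ^ 'n"

definition lex_less :: "(real, 'd::{finite,linorder}) vec \<Rightarrow> (real, 'd) vec \<Rightarrow> bool" where
  "lex_less x y \<longleftrightarrow> (\<exists>i. x $ i < y $ i \<and> (\<forall>j<i. x $ j = y $ j))"

definition elen :: "('d::finite) edge \<Rightarrow> real" where
  "elen e = norm (snd e - fst e)"

definition seg :: "('d::finite) edge \<Rightarrow> 'd pt set" where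
  "seg e = closed_segment (fst e) (snd e)"

definition lattice :: "('d::{finite,linorder}) edge set \<Rightarrow> bool" where
  "lattice l \<longleftrightarrow> finite l \<and> (\<forall>e\<in>l. lex_less (fst e) (snd e)) \<and>
     (\<forall>e\<in>l. \<forall>e'\<in>l. e \<noteq> e' \<longrightarrow> seg e \<inter> seg e' \<subseteq> {fst e, snd e} \<inter> {fst e', snd e'})"

definition subdiv :: "('d::finite) edge set \<Rightarrow> 'd edge set \<Rightarrow> bool" where
  "subdiv l m \<longleftrightarrow> (\<forall>e\<in>l. \<exists>(N::nat) (t::nat \<Rightarrow> real).
      (\<forall>s\<in>{1..N}. 0 < t s \<and> t s < 1) \<and> (\<forall>s\<in>{1..<N}. t s < t (Suc s)) \<and>
      (let y = (\<lambda>s. if s = 0 then fst e else if s = Suc N then snd e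
                     else (1 - t s) *\<^sub>R fst e + t s *\<^sub>R snd e)
       in \<forall>s\<in>{1..Suc N}. (y (s - 1), y s) \<in> m))"

definition refine :: "('d::finite) edge set \<Rightarrow> nat \<Rightarrow> 'd edge set" where
  "refine l R = (\<Union>e\<in>l. (\<lambda>i::nat.
      ((1 - real i / real R) *\<^sub>R fst e + (real i / real R) *\<^sub>R snd e,
       (1 - real (Suc i) / real R) *\<^sub>R fst e + (real (Suc i) / real R) *\<^sub>R snd e)) ` {..<R})"

text \<open>The pieces of an edge e in a lattice m (for l \<le> m these are exactly the
  edges e_s of the subdivision of e).\<close>
definition pieces :: "('d::finite) edge \<Rightarrow> 'd edge set \<Rightarrow> 'd edge set" where
  "pieces e m = {f \<in> m. seg f \<subseteq> seg e}"

definition tcl :: "('d::finite) edge set \<Rightarrow> ('d,'n::finite) cfg \<Rightarrow> ('d,'n) cfg" where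
  "tcl S X = (\<lambda>e. if e \<in> S then (\<chi> i. frac (X e $ i)) else 0)"

definition Gsp :: "('d::finite) edge set \<Rightarrow> ('d,'n::finite) cfg set" where
  "Gsp S = range (tcl S)"

definition tadd :: "('d::finite) edge set \<Rightarrow> ('d,'n::finite) cfg \<Rightarrow> ('d,'n) cfg \<Rightarrow> ('d,'n) cfg" where
  "tadd S q X = tcl S (\<lambda>e. q e + X e)"

definition gconf :: "('d::finite) edge set \<Rightarrow> 'd edge set \<Rightarrow> ('d,'n::finite) cfg \<Rightarrow> ('d,'n) cfg" where
  "gconf l m q = tcl l (\<lambda>e. \<Sum>f\<in>pieces e m. q f)"

definition Sml :: "('d::finite) edge set \<Rightarrow> 'd edge set \<Rightarrow> ('d,'n::finite) cfg \<Rightarrow> ('d,'n) cfg" where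
  "Sml m l \<xi> = (\<lambda>f. \<Sum>e\<in>{e \<in> l. f \<in> pieces e m}. (elen f / elen e) *\<^sub>R \<xi> e)"

definition chi :: "('d::finite) edge set \<Rightarrow> ('d edge \<Rightarrow> 'd edge) \<Rightarrow> ('d,'n::finite) cfg \<Rightarrow> ('d,'n) cfg" where
  "chi l ch q = (\<lambda>e. if e \<in> l then q (ch e) else 0)"

definition phi :: "('d::finite) edge set \<Rightarrow> 'd edge set \<Rightarrow> nat \<Rightarrow> ('d edge \<Rightarrow> 'd edge)
    \<Rightarrow> ('d,'n::finite) cfg \<Rightarrow> ('d,'n) cfg" where
  "phi l m R ch q = chi l ch (gconf (refine l R) m q)"

definition Ubox :: "('d::finite) edge set \<Rightarrow> real \<Rightarrow> ('d,'n::finite) cfg set" where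
  "Ubox l \<delta> = {\<xi>. (\<forall>e\<in>l. \<forall>i. - 1/2 + \<delta>/2 < \<xi> e $ i \<and> \<xi> e $ i < 1/2 - \<delta>/2)
                   \<and> (\<forall>e. e \<notin> l \<longrightarrow> \<xi> e = 0)}"

definition Vb :: "('d::finite) edge set \<Rightarrow> real \<Rightarrow> ('d,'n::finite) cfg set" where
  "Vb l \<delta> = tcl l ` Ubox l \<delta>"

definition Vt :: "('d::finite) edge set \<Rightarrow> 'd edge set \<Rightarrow> nat \<Rightarrow> ('d edge \<Rightarrow> 'd edge) \<Rightarrow> real
    \<Rightarrow> ('d,'n::finite) cfg set" where
  "Vt l m R ch \<delta> = {q \<in> Gsp m. phi l m R ch q \<in> Vb l \<delta>}"

definition phiu :: "('d::finite) edge set \<Rightarrow> 'd edge set \<Rightarrow> nat \<Rightarrow> ('d edge \<Rightarrow> 'd edge)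
    \<Rightarrow> ('d,'n::finite) cfg \<Rightarrow> ('d,'n) cfg" where
  "phiu l m R ch q = (THE \<xi>. \<xi> \<in> Ubox l 0 \<and> phi l m R ch q = tcl l \<xi>)"

definition Fmap :: "('d::finite) edge set \<Rightarrow> 'd edge set \<Rightarrow> nat \<Rightarrow> ('d edge \<Rightarrow> 'd edge)
    \<Rightarrow> real \<Rightarrow> real \<Rightarrow> ('d,'n::finite) cfg \<Rightarrow> ('d,'n) cfg" where
  "Fmap l m R ch h1 h q =
     tadd m q (\<lambda>f. (real R * (h / h1 - 1)) *\<^sub>R Sml m l (phiu l m R ch q) f)"

definition Wsp :: "('d::finite) edge set \<Rightarrow> ('d,'n::finite) cfg set" where
  "Wsp S = {X. \<forall>e. e \<notin> S \<longrightarrow> X e = 0}"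

definition bvec :: "('d::finite) edge \<Rightarrow> 'n::finite \<Rightarrow> ('d,'n) cfg" where
  "bvec f i = (\<lambda>e. if e = f then axis i 1 else 0)"

definition has_partials :: "('d::finite) edge set \<Rightarrow> ('d,'n::finite) cfg set
    \<Rightarrow> (('d,'n) cfg \<Rightarrow> ('d,'n) cfg) \<Rightarrow> ('d edge \<Rightarrow> 'n \<Rightarrow> ('d,'n) cfg \<Rightarrow> ('d,'n) cfg) \<Rightarrow> bool" where
  "has_partials S U g Dg \<longleftrightarrow> (\<forall>X\<in>U. \<forall>f\<in>S. \<forall>i. \<forall>e\<in>S.
     ((\<lambda>t. g (\<lambda>e'. X e' + t *\<^sub>R bvec f i e') e) has_vector_derivative Dg f i X e) (at 0))"

fun Ck :: "nat \<Rightarrow> ('d::finite) edge set \<Rightarrow> ('d,'n::finite) cfg set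
    \<Rightarrow> (('d,'n) cfg \<Rightarrow> ('d,'n) cfg) \<Rightarrow> bool" where
  "Ck 0 S U g = (\<forall>e\<in>S. continuous_on U (\<lambda>X. g X e))"
| "Ck (Suc k) S U g = (Ck 0 S U g \<and> (\<exists>Dg. has_partials S U g Dg \<and> (\<forall>f\<in>S. \<forall>i. Ck k S U (Dg f i))))"

definition smooth_on :: "('d::finite) edge set \<Rightarrow> ('d,'n::finite) cfg set
    \<Rightarrow> (('d,'n) cfg \<Rightarrow> ('d,'n) cfg) \<Rightarrow> bool" where
  "smooth_on S U g \<longleftrightarrow> (\<forall>k. Ck k S U g)"

text \<open>A map F defined on a subset A of G^m is smooth iff it has smooth local lifts
  through the covering map (R^n)^m \<rightarrow> G^m.\<close>
definition tsmooth_on :: "('d::finite) edge set \<Rightarrow> ('d,'n::finite) cfg set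
    \<Rightarrow> (('d,'n) cfg \<Rightarrow> ('d,'n) cfg) \<Rightarrow> bool" where
  "tsmooth_on m A F \<longleftrightarrow> (\<forall>X\<in>Wsp m. tcl m X \<in> A \<longrightarrow>
     (\<exists>U g. X \<in> U \<and> openin (top_of_set (Wsp m)) U \<and>
        (\<forall>Y\<in>U. tcl m Y \<in> A \<and> tcl m (g Y) = F (tcl m Y)) \<and> smooth_on m U g))"

definition tdiffeo :: "('d::finite) edge set \<Rightarrow> ('d,'n::finite) cfg set \<Rightarrow> ('d,'n) cfg set
    \<Rightarrow> (('d,'n) cfg \<Rightarrow> ('d,'n) cfg) \<Rightarrow> bool" where
  "tdiffeo m A B F \<longleftrightarrow> bij_betw F A B \<and> tsmooth_on m A F \<and> tsmooth_on m B (inv_into A F)"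

definition det_on :: "'i set \<Rightarrow> ('i \<Rightarrow> 'i \<Rightarrow> real) \<Rightarrow> real" where
  "det_on I M = (\<Sum>p\<in>{p. p permutes I}. of_int (sign p) * (\<Prod>i\<in>I. M i (p i)))"

end

(* The coordinate phi of G^m is induced by the linear map phi_lin, which sums the coordinates
   of the pieces in m of the chosen piece e' of each edge e, and phi_lin (S^ml xi) = xi / R.
   Hence near every point of the domain the box coordinate phiu is phi_lin minus a locally
   constant integer vector, so F is locally the affine map
   Y |-> Y + R (h/h1 - 1) S^ml (phi_lin Y - k) and multiplies phiu by h/h1.  This carries the
   box U_delta1 onto U_delta2; the map with h and h1 exchanged is the inverse, and both are
   smooth.  The Jacobian id + R (h/h1 - 1) S^ml phi_lin is the identity on the columns outside
   the chosen pieces and block diagonal on them, with one block "identity plus rank one" per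
   edge of l and coordinate direction, of determinant 1 + (h/h1 - 1) = h/h1.  For the
   translation formula, phiu moves along the segment phiu q + t h1 xi / R; since the path stays
   in the domain this segment never meets the boundary of the box, so it ends at
   phiu q + h1 xi / R, and F then adds R (h/h1 - 1) S^ml (h1 xi / R) = S^ml ((h - h1) xi). *)

theory Submission
  imports Defs
begin

section \<open>Leibniz determinants over finite index sets\<close>

lemma det_on_cong:
  assumes "\<And>x y. x \<in> I \<Longrightarrow> y \<in> I \<Longrightarrow> M x y = M' x y"
  shows "det_on I M = det_on I M'"
  unfolding det_on_def
proof (rule sum.cong[OF refl])
  fix p assume "p \<in> {p. p permutes I}"
  then have "\<And>x. x \<in> I \<Longrightarrow> p x \<in> I" using permutes_in_image by fastforce
  then show "of_int (sign p) * (\<Prod>i\<in>I. M i (p i)) = of_int (sign p) * (\<Prod>i\<in>I. M' i (p i))"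
    using assms by simp
qed

lemma card_le_1_iff_empty_or_singleton:
  "finite X \<Longrightarrow> card X \<le> 1 \<longleftrightarrow> X = {} \<or> (\<exists>x. X = {x})"
  by (auto simp: le_Suc_eq One_nat_def card_1_singleton_iff)

lemma sum_sign_permutes:
  assumes "finite S"
  shows "(\<Sum>p\<in>{p. p permutes S}. of_int (sign p) :: real) = (if card S \<le> 1 then 1 else 0)"
proof (cases "card S \<le> 1")
  case True
  then have "S = {} \<or> (\<exists>x. S = {x})" using assms card_le_1_iff_empty_or_singleton by blast
  then show ?thesis using True by auto
next
  case False
  then obtain a b where ab: "a \<in> S" "b \<in> S" "a \<noteq> b"
    using card_le_Suc0_iff_eq[OF assms] by auto
  let ?t = "Transposition.transpose a b"
  have t: "?t permutes S" using ab by (simp add: permutes_swap_id)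
  \<comment> \<open>composing with a transposition is a sign-reversing involution\<close>
  have "(\<Sum>p\<in>{p. p permutes S}. of_int (sign p) :: real)
      = (\<Sum>p\<in>{p. p permutes S}. of_int (sign (?t \<circ> p)))"
  proof -
    have tt: "?t \<circ> (?t \<circ> p) = p" for p by (simp add: o_assoc[symmetric] fun_eq_iff)
    show ?thesis
      by (rule sum.reindex_bij_witness[of _ "\<lambda>p. ?t \<circ> p" "\<lambda>p. ?t \<circ> p"])
        (use t in \<open>auto simp: permutes_compose tt\<close>)
  qed
  also have "\<dots> = (\<Sum>p\<in>{p. p permutes S}. - of_int (sign p))"
    using ab assms
    by (intro sum.cong) (auto simp: sign_compose permutation_swap_id sign_swap_id
        dest: permutes_imp_permutation)
  finally show ?thesis using False by (simp add: sum_negf)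
qed

lemma sum_sign_permutes_fixing:
  assumes "finite C" "X \<subseteq> C"
  shows "(\<Sum>p\<in>{p. p permutes C}. of_int (sign p) * (\<Prod>x\<in>C - X. if x = p x then 1 else 0))
       = (\<Sum>p\<in>{p. p permutes X}. of_int (sign p) :: real)"
proof -
  have "(\<Sum>p\<in>{p. p permutes C}. of_int (sign p) * (\<Prod>x\<in>C - X. if x = p x then 1 else 0))
      = (\<Sum>p\<in>{p. p permutes X}. of_int (sign p) * (\<Prod>x\<in>C - X. if x = p x then 1 else (0::real)))"
  proof (rule sum.mono_neutral_right)
    show "finite {p. p permutes C}" using assms(1) finite_permutations by blast
    show "{p. p permutes X} \<subseteq> {p. p permutes C}" using assms(2) permutes_subset by blast
    show "\<forall>p\<in>{p. p permutes C} - {p. p permutes X}.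
        of_int (sign p) * (\<Prod>x\<in>C - X. if x = p x then 1 else (0::real)) = 0"
    proof
      fix p assume "p \<in> {p. p permutes C} - {p. p permutes X}"
      then have "p permutes C" "\<not> p permutes X" by auto
      then obtain x where "x \<in> C - X" "p x \<noteq> x"
        using permutes_superset[of p C X] by blast
      then have "(\<Prod>x\<in>C - X. if x = p x then 1 else (0::real)) = 0"
        using assms(1) by (intro prod_zero) (auto intro!: bexI[of _ x])
      then show "of_int (sign p) * (\<Prod>x\<in>C - X. if x = p x then 1 else (0::real)) = 0" by simp
    qed
  qed
  also have "\<dots> = (\<Sum>p\<in>{p. p permutes X}. of_int (sign p))"
    by (intro sum.cong) (auto simp: permutes_not_in)
  finally show ?thesis .
qed

lemma det_on_identity_plus_rank_one:
  assumes "finite C"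
  shows "det_on C (\<lambda>x y. (if x = y then 1 else 0) + a x) = 1 + (\<Sum>x\<in>C. a x)"
proof -
  let ?\<delta> = "\<lambda>x y. if x = y then 1 else 0 :: real"
  have "det_on C (\<lambda>x y. ?\<delta> x y + a x)
      = (\<Sum>p\<in>{p. p permutes C}. of_int (sign p) *
           (\<Sum>X\<in>Pow C. (\<Prod>x\<in>X. a x) * (\<Prod>x\<in>C - X. ?\<delta> x (p x))))"
    unfolding det_on_def by (intro sum.cong refl) (simp add: prod_add[OF assms] add.commute)
  also have "\<dots> = (\<Sum>X\<in>Pow C. (\<Prod>x\<in>X. a x) *
           (\<Sum>p\<in>{p. p permutes C}. of_int (sign p) * (\<Prod>x\<in>C - X. ?\<delta> x (p x))))"
    by (simp add: sum_distrib_left sum_distrib_right mult_ac sum.swap[of _ "Pow C"])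
  also have "\<dots> = (\<Sum>X\<in>Pow C. if card X \<le> 1 then \<Prod>x\<in>X. a x else 0)"
  proof (intro sum.cong refl)
    fix X assume "X \<in> Pow C"
    then have "finite X" "X \<subseteq> C" using assms finite_subset by auto
    then show "(\<Prod>x\<in>X. a x) * (\<Sum>p\<in>{p. p permutes C}. of_int (sign p) * (\<Prod>x\<in>C - X. ?\<delta> x (p x)))
        = (if card X \<le> 1 then \<Prod>x\<in>X. a x else 0)"
      using assms by (simp add: sum_sign_permutes_fixing sum_sign_permutes)
  qed
  also have "\<dots> = (\<Sum>X\<in>{X \<in> Pow C. card X \<le> 1}. \<Prod>x\<in>X. a x)"
    by (rule sum.inter_filter[symmetric]) (use assms in simp)
  also have "{X \<in> Pow C. card X \<le> 1} = insert {} ((\<lambda>x. {x}) ` C)"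
    using assms finite_subset card_le_1_iff_empty_or_singleton by auto
  also have "(\<Sum>X\<in>insert {} ((\<lambda>x. {x}) ` C). \<Prod>x\<in>X. a x) = 1 + (\<Sum>x\<in>C. a x)"
    using assms by (subst sum.insert) (auto simp: sum.reindex inj_on_def)
  finally show ?thesis .
qed

lemma det_on_identity_outside:
  assumes "finite I" "Q \<subseteq> I"
    and "\<And>x y. x \<in> I \<Longrightarrow> y \<in> I - Q \<Longrightarrow> M x y = (if x = y then 1 else 0)"
  shows "det_on I M = det_on Q M"
proof -
  have "det_on I M = (\<Sum>p\<in>{p. p permutes Q}. of_int (sign p) * (\<Prod>x\<in>I. M x (p x)))"
    unfolding det_on_def
  proof (rule sum.mono_neutral_right)
    show "finite {p. p permutes I}" using assms(1) finite_permutations by blast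
    show "{p. p permutes Q} \<subseteq> {p. p permutes I}" using assms(2) permutes_subset by blast
    show "\<forall>p\<in>{p. p permutes I} - {p. p permutes Q}. of_int (sign p) * (\<Prod>x\<in>I. M x (p x)) = 0"
    proof
      fix p assume p: "p \<in> {p. p permutes I} - {p. p permutes Q}"
      have "(\<Prod>x\<in>I. M x (p x)) = 0"
      proof (rule ccontr)
        assume "(\<Prod>x\<in>I. M x (p x)) \<noteq> 0"
        then have nz: "M x (p x) \<noteq> 0" if "x \<in> I" for x using that assms(1) by auto
        \<comment> \<open>a column outside Q can only be hit from its own row\<close>
        have "p y = y" if y: "y \<in> I - Q" for y
        proof -
          have "y \<in> p ` I" using p y permutes_image[of p I] by auto
          then obtain x where "x \<in> I" "p x = y" by blast
          with nz[of x] assms(3)[of x y] y have "x = y" by (auto split: if_splits)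
          with \<open>p x = y\<close> show ?thesis by simp
        qed
        then have "p permutes Q" using p permutes_superset[of p I Q] by blast
        then show False using p by simp
      qed
      then show "of_int (sign p) * (\<Prod>x\<in>I. M x (p x)) = 0" by simp
    qed
  qed
  also have "\<dots> = det_on Q M"
    unfolding det_on_def
  proof (intro sum.cong refl)
    fix p assume "p \<in> {p. p permutes Q}"
    then have "(\<Prod>x\<in>I - Q. M x (p x)) = 1"
      using assms(3) by (intro prod.neutral) (auto simp: permutes_not_in)
    then show "of_int (sign p) * (\<Prod>x\<in>I. M x (p x)) = of_int (sign p) * (\<Prod>x\<in>Q. M x (p x))"
      using assms(1,2) by (simp add: prod.subset_diff)
  qed
  finally show ?thesis .
qed

lemma permutes_Un_image_right:
  assumes r: "r permutes A \<union> B" and "A \<inter> B = {}" "finite A" "r ` A \<subseteq> A" "x \<in> B"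
  shows "r x \<in> B"
proof -
  have rA: "r ` A = A"
    using assms permutes_inj_on[OF r] by (simp add: endo_inj_surj)
  have "r x \<notin> A"
  proof
    assume "r x \<in> A"
    then obtain a where "a \<in> A" "r x = r a" using rA by (metis imageE)
    then have "x = a" using permutes_inj[OF r] by (auto simp: inj_def)
    then show False using assms(2,5) \<open>a \<in> A\<close> by blast
  qed
  then show ?thesis using permutes_in_image[OF r, of x] assms(5) by blast
qed

lemma bij_betw_permutes_Un_parts:
  assumes r: "r permutes A \<union> B" and "A \<inter> B = {}" "finite A" "r ` A \<subseteq> A"
  shows "bij_betw r A A" and "bij_betw r B B"
proof -
  show "bij_betw r A A"
    using assms permutes_inj_on[OF r] by (simp add: bij_betw_def endo_inj_surj)
  have "B \<subseteq> r ` B"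
  proof
    fix y assume "y \<in> B"
    then obtain x where "x \<in> A \<union> B" "y = r x" using permutes_image[OF r] by blast
    moreover have "x \<notin> A" using \<open>y \<in> B\<close> \<open>y = r x\<close> assms(2,4) by blast
    ultimately show "y \<in> r ` B" by blast
  qed
  moreover have "r ` B \<subseteq> B" using permutes_Un_image_right[OF assms] by blast
  ultimately show "bij_betw r B B"
    using permutes_inj[OF r] by (auto simp: bij_betw_def inj_on_def inj_def)
qed

lemma restrict_id_compose_permutes:
  assumes "A \<inter> B = {}" and p: "p permutes A" and q: "q permutes B"
  shows "restrict_id (p \<circ> q) A = p" and "restrict_id (p \<circ> q) B = q"
proof
  fix x
  have "x \<in> A \<Longrightarrow> q x = x" using assms(1) permutes_not_in[OF q, of x] by blast
  then show "restrict_id (p \<circ> q) A x = p x"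
    using p by (cases "x \<in> A") (auto simp: permutes_not_in)
next
  show "restrict_id (p \<circ> q) B = q"
  proof
    fix x
    have "x \<in> B \<Longrightarrow> p (q x) = q x"
      using assms(1) permutes_in_image[OF q, of x] permutes_not_in[OF p, of "q x"] by blast
    then show "restrict_id (p \<circ> q) B x = q x"
      using q by (cases "x \<in> B") (auto simp: permutes_not_in)
  qed
qed

lemma restrict_id_decompose_permutes_Un:
  assumes r: "r permutes A \<union> B" and "A \<inter> B = {}" "finite A" "r ` A \<subseteq> A"
  shows "restrict_id r A \<circ> restrict_id r B = r"
proof
  fix x show "(restrict_id r A \<circ> restrict_id r B) x = r x"
  proof (cases "x \<in> B")
    case True
    then have "r x \<notin> A" using permutes_Un_image_right[OF assms] assms(2) by blast
    then show ?thesis using True by simp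
  next
    case False
    then show ?thesis using permutes_not_in[OF r, of x] by (cases "x \<in> A") auto
  qed
qed

lemma bij_betw_compose_permutes_Un:
  assumes "A \<inter> B = {}" "finite A"
  shows "bij_betw (\<lambda>(p, q). p \<circ> q) ({p. p permutes A} \<times> {q. q permutes B})
           {r. r permutes A \<union> B \<and> r ` A \<subseteq> A}"
proof (rule bij_betw_byWitness[where f' = "\<lambda>r. (restrict_id r A, restrict_id r B)"])
  show "\<forall>pq\<in>{p. p permutes A} \<times> {q. q permutes B}.
      (\<lambda>r. (restrict_id r A, restrict_id r B)) ((\<lambda>(p, q). p \<circ> q) pq) = pq"
    using restrict_id_compose_permutes[OF assms(1)] by auto
  show "\<forall>r\<in>{r. r permutes A \<union> B \<and> r ` A \<subseteq> A}.
      (\<lambda>(p, q). p \<circ> q) ((\<lambda>r. (restrict_id r A, restrict_id r B)) r) = r"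
    using restrict_id_decompose_permutes_Un assms by auto
  show "(\<lambda>(p, q). p \<circ> q) ` ({p. p permutes A} \<times> {q. q permutes B})
      \<subseteq> {r. r permutes A \<union> B \<and> r ` A \<subseteq> A}"
  proof (clarify, intro conjI)
    fix p q assume p: "p permutes A" and q: "q permutes B"
    show "p \<circ> q permutes A \<union> B"
      using permutes_compose[OF permutes_subset[OF q] permutes_subset[OF p]] by blast
    show "(p \<circ> q) ` A \<subseteq> A"
      using assms(1) p q by (auto simp: permutes_not_in permutes_in_image disjoint_iff)
  qed
  show "(\<lambda>r. (restrict_id r A, restrict_id r B)) ` {r. r permutes A \<union> B \<and> r ` A \<subseteq> A}
      \<subseteq> {p. p permutes A} \<times> {q. q permutes B}"
    using bij_betw_permutes_Un_parts assms by (auto intro!: permutes_restrict_id)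
qed

lemma leibniz_term_compose_permutes_Un:
  assumes fin: "finite A" "finite B" and disj: "A \<inter> B = {}"
    and p: "p permutes A" and q: "q permutes B"
  shows "of_int (sign (p \<circ> q)) * (\<Prod>x\<in>A \<union> B. M x ((p \<circ> q) x))
       = (of_int (sign p) * (\<Prod>x\<in>A. M x (p x))) * (of_int (sign q) * (\<Prod>x\<in>B. M x (q x)) :: real)"
proof -
  have "(\<Prod>x\<in>A. M x (p (q x))) = (\<Prod>x\<in>A. M x (p x))"
  proof (intro prod.cong refl)
    fix x assume "x \<in> A"
    then have "x \<notin> B" using disj by blast
    then show "M x (p (q x)) = M x (p x)" by (simp add: permutes_not_in[OF q])
  qed
  moreover have "(\<Prod>x\<in>B. M x (p (q x))) = (\<Prod>x\<in>B. M x (q x))"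
  proof (intro prod.cong refl)
    fix x assume "x \<in> B"
    then have "q x \<notin> A" using disj permutes_in_image[OF q] by blast
    then show "M x (p (q x)) = M x (q x)" by (simp add: permutes_not_in[OF p])
  qed
  moreover have "sign (p \<circ> q) = sign p * sign q"
    using p q fin by (simp add: sign_compose permutes_imp_permutation)
  ultimately show ?thesis
    using fin disj by (simp add: prod.union_disjoint)
qed

lemma det_on_Un_block_triangular:
  assumes fin: "finite A" "finite B" and disj: "A \<inter> B = {}"
    and zero: "\<And>x y. x \<in> A \<Longrightarrow> y \<in> B \<Longrightarrow> M x y = 0"
  shows "det_on (A \<union> B) M = det_on A M * det_on B M"
proof -
  let ?P = "{r. r permutes A \<union> B \<and> r ` A \<subseteq> A}"
  \<comment> \<open>only permutations mapping A into A contribute, and these are exactly the products p \<circ> q\<close>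
  have "det_on (A \<union> B) M = (\<Sum>r\<in>?P. of_int (sign r) * (\<Prod>x\<in>A \<union> B. M x (r x)))"
    unfolding det_on_def
  proof (rule sum.mono_neutral_right)
    show "finite {p. p permutes A \<union> B}" using fin finite_permutations by blast
    show "\<forall>r\<in>{p. p permutes A \<union> B} - ?P. of_int (sign r) * (\<Prod>x\<in>A \<union> B. M x (r x)) = 0"
    proof
      fix r assume r: "r \<in> {p. p permutes A \<union> B} - ?P"
      then obtain x where "x \<in> A" "r x \<notin> A" by auto
      moreover have "r x \<in> A \<union> B" using r \<open>x \<in> A\<close> permutes_in_image by fastforce
      ultimately have "M x (r x) = 0" using zero by blast
      then show "of_int (sign r) * (\<Prod>x\<in>A \<union> B. M x (r x)) = 0"
        using fin \<open>x \<in> A\<close> by (auto intro!: prod_zero)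
    qed
  qed auto
  also have "\<dots> = (\<Sum>(p, q)\<in>{p. p permutes A} \<times> {q. q permutes B}.
                      of_int (sign (p \<circ> q)) * (\<Prod>x\<in>A \<union> B. M x ((p \<circ> q) x)))"
    using sum.reindex_bij_betw[OF bij_betw_compose_permutes_Un[OF disj fin(1)],
        of "\<lambda>r. of_int (sign r) * (\<Prod>x\<in>A \<union> B. M x (r x))"]
    by (simp add: case_prod_unfold)
  also have "\<dots> = (\<Sum>(p, q)\<in>{p. p permutes A} \<times> {q. q permutes B}.
                      (of_int (sign p) * (\<Prod>x\<in>A. M x (p x))) * (of_int (sign q) * (\<Prod>x\<in>B. M x (q x))))"
    using leibniz_term_compose_permutes_Un[OF fin disj] by (intro sum.cong) auto
  also have "\<dots> = det_on A M * det_on B M"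
    unfolding det_on_def by (simp add: sum_product sum.cartesian_product case_prod_unfold)
  finally show ?thesis .
qed

lemma det_on_UN_block_diagonal:
  assumes "finite K" "\<And>k. k \<in> K \<Longrightarrow> finite (B k)"
    and "\<And>k k'. k \<in> K \<Longrightarrow> k' \<in> K \<Longrightarrow> k \<noteq> k' \<Longrightarrow> B k \<inter> B k' = {}"
    and "\<And>k k' x y. k \<in> K \<Longrightarrow> k' \<in> K \<Longrightarrow> k \<noteq> k' \<Longrightarrow> x \<in> B k \<Longrightarrow> y \<in> B k' \<Longrightarrow> M x y = 0"
  shows "det_on (\<Union>k\<in>K. B k) M = (\<Prod>k\<in>K. det_on (B k) M)"
  using assms
proof (induction K rule: finite_induct)
  case empty
  then show ?case by (simp add: det_on_def)
next
  case (insert k K)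
  have "det_on (\<Union>k\<in>insert k K. B k) M = det_on (B k \<union> (\<Union>k\<in>K. B k)) M" by simp
  also have "\<dots> = det_on (B k) M * det_on (\<Union>k\<in>K. B k) M"
    using insert by (intro det_on_Un_block_triangular) (auto, blast+)
  also have "det_on (\<Union>k\<in>K. B k) M = (\<Prod>k\<in>K. det_on (B k) M)"
    by (intro insert.IH) (meson insertI2 insert.prems)+
  finally show ?case using insert.hyps by simp
qed

section \<open>Subdivided edges\<close>

lemma lattice_finite: "lattice L \<Longrightarrow> finite L"
  unfolding lattice_def by blast

lemma lattice_edge_nondegenerate: "lattice L \<Longrightarrow> e \<in> L \<Longrightarrow> fst e \<noteq> snd e"
  unfolding lattice_def lex_less_def by auto

lemma lattice_edge_eqI:
  assumes "lattice L" "f \<in> L" "g \<in> L" "midpoint (fst f) (snd f) \<in> seg g"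
  shows "f = g"
proof (rule ccontr)
  assume "f \<noteq> g"
  moreover have "midpoint (fst f) (snd f) \<in> seg f" by (simp add: seg_def)
  ultimately have "midpoint (fst f) (snd f) \<in> {fst f, snd f}"
    using assms unfolding lattice_def by blast
  then show False using lattice_edge_nondegenerate[OF assms(1,2)] by auto
qed

lemma lattice_unique_superedge:
  assumes "lattice L" "e \<in> L" "e' \<in> L" "fst f \<noteq> snd f" "seg f \<subseteq> seg e" "seg f \<subseteq> seg e'"
  shows "e = e'"
proof (rule ccontr)
  assume "e \<noteq> e'"
  then have "seg f \<subseteq> {fst e, snd e}" using assms unfolding lattice_def by blast
  then have "finite (seg f)" by (rule finite_subset) simp
  then show False using assms(4) by (simp add: seg_def)
qed

lemma linepath_diff: "linepath A B v - linepath A B u = (v - u) *\<^sub>R (B - A)"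
  by (simp add: linepath_def algebra_simps)

lemma linepath_in_closed_segment_linepath:
  assumes "a < b" "a \<le> u" "u \<le> b"
  shows "linepath A B u \<in> closed_segment (linepath A B a) (linepath A B b)"
proof -
  define v where "v = (u - a) / (b - a)"
  have u: "u = a + v * (b - a)" using assms by (simp add: v_def)
  have "linepath A B u = (1 - v) *\<^sub>R linepath A B a + v *\<^sub>R linepath A B b"
    unfolding u by (simp add: linepath_def algebra_simps)
  moreover have "0 \<le> v" "v \<le> 1" using assms by (auto simp: v_def divide_simps)
  ultimately show ?thesis unfolding in_segment by blast
qed

lemma ex_bracketing_index:
  fixes T :: "nat \<Rightarrow> 'a::linorder"
  shows "T 0 \<le> u \<Longrightarrow> u \<le> T (Suc k) \<Longrightarrow> \<exists>s\<le>k. T s \<le> u \<and> u \<le> T (Suc s)"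
proof (induction k)
  case (Suc k)
  show ?case
  proof (cases "u \<le> T (Suc k)")
    case True
    then show ?thesis using Suc le_SucI by blast
  next
    case False
    then show ?thesis using Suc.prems by (intro exI[of _ "Suc k"]) auto
  qed
qed auto

lemma pieces_of_chain:
  fixes T :: "nat \<Rightarrow> real"
  assumes m: "lattice m" and T: "strict_mono T" "T 0 = 0" "T (Suc N) = 1"
    and chain: "\<And>s. s \<le> N \<Longrightarrow> (linepath A B (T s), linepath A B (T (Suc s))) \<in> m"
  shows "pieces (A, B) m = (\<lambda>s. (linepath A B (T s), linepath A B (T (Suc s)))) ` {..N}"
    (is "_ = ?pc ` _")
proof
  have T01: "0 \<le> T s \<and> T s \<le> 1" if "s \<le> Suc N" for s
    using T strict_mono_less_eq[OF T(1), of 0 s] strict_mono_less_eq[OF T(1), of s "Suc N"] that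
    by simp
  have "seg (?pc s) \<subseteq> seg (A, B)" if "s \<le> N" for s
    unfolding seg_def using T01[of s] T01[of "Suc s"] that
    by (intro closed_segment_subset) (auto intro: linepath_in_path)
  then show "?pc ` {..N} \<subseteq> pieces (A, B) m"
    using chain by (auto simp: pieces_def)
  show "pieces (A, B) m \<subseteq> ?pc ` {..N}"
  proof
    fix f assume f: "f \<in> pieces (A, B) m"
    \<comment> \<open>the midpoint of f lies on some link of the chain, and two lattice edges sharing it coincide\<close>
    define z where "z = midpoint (fst f) (snd f)"
    have "z \<in> seg (A, B)" using f by (auto simp: pieces_def z_def seg_def)
    then obtain u where u: "u \<in> {0..1}" "z = linepath A B u"
      unfolding seg_def linepath_image_01[symmetric] by auto
    then obtain s where s: "s \<le> N" "T s \<le> u" "u \<le> T (Suc s)"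
      using ex_bracketing_index[of T u N] T by auto
    then have "z \<in> seg (?pc s)"
      using linepath_in_closed_segment_linepath strict_monoD[OF T(1), of s "Suc s"] u(2)
      by (simp add: seg_def)
    then have "f = ?pc s"
      using f chain[OF s(1)] lattice_edge_eqI[OF m] by (auto simp: pieces_def z_def)
    then show "f \<in> ?pc ` {..N}" using s(1) by blast
  qed
qed

lemma sum_elen_chain:
  fixes T :: "nat \<Rightarrow> real"
  assumes T: "strict_mono T" "T 0 = 0" "T (Suc N) = 1" and "A \<noteq> B"
  shows "(\<Sum>f\<in>(\<lambda>s. (linepath A B (T s), linepath A B (T (Suc s)))) ` {..N}. elen f) = elen (A, B)"
proof -
  have "inj_on (\<lambda>s. (linepath A B (T s), linepath A B (T (Suc s)))) {..N}"
    using \<open>A \<noteq> B\<close> strict_mono_eq[OF T(1)] linepath_diff[of A B]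
    by (intro inj_onI) (metis (no_types, lifting) Pair_inject eq_iff_diff_eq_0 scaleR_eq_0_iff)
  then have "(\<Sum>f\<in>(\<lambda>s. (linepath A B (T s), linepath A B (T (Suc s)))) ` {..N}. elen f)
      = (\<Sum>s\<le>N. (T (Suc s) - T s) * norm (B - A))"
    using strict_monoD[OF T(1), of _ "Suc _"]
    by (simp add: sum.reindex elen_def linepath_diff[of A B] abs_of_pos)
  also have "\<dots> = norm (B - A)"
    using T by (simp add: sum_distrib_right[symmetric] atMost_atLeast0 sum_Suc_diff)
  finally show ?thesis by (simp add: elen_def)
qed

lemma subdiv_sum_elen_pieces:
  assumes "subdiv l m" "lattice m" "e \<in> l" "fst e \<noteq> snd e"
  shows "(\<Sum>f\<in>pieces e m. elen f) = elen e"
proof -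
  obtain N and t :: "nat \<Rightarrow> real" where
    t01: "\<forall>s\<in>{1..N}. 0 < t s \<and> t s < 1" and t_mono: "\<forall>s\<in>{1..<N}. t s < t (Suc s)" and
    chain: "let y = (\<lambda>s. if s = 0 then fst e else if s = Suc N then snd e
                         else (1 - t s) *\<^sub>R fst e + t s *\<^sub>R snd e)
            in \<forall>s\<in>{1..Suc N}. (y (s - 1), y s) \<in> m"
    using assms(1,3) unfolding subdiv_def by blast
  \<comment> \<open>the parameters 0 < t 1 < ... < t N < 1, extended to a strictly increasing sequence\<close>
  define T where "T s = (if s = 0 then 0 else if s \<le> N then t s else real s - real N)" for s
  have T: "strict_mono T" "T 0 = 0" "T (Suc N) = 1"
  proof -
    have "T s < T (Suc s)" for s
      using t01 t_mono
      by (cases "s = 0"; cases "N = 0"; cases "s < N"; cases "s = N") (auto simp: T_def)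
    then show "strict_mono T" by (simp add: strict_mono_Suc_iff)
  qed (simp_all add: T_def)
  define y where "y s = (if s = 0 then fst e else if s = Suc N then snd e
                          else (1 - t s) *\<^sub>R fst e + t s *\<^sub>R snd e)" for s
  have y: "y s = linepath (fst e) (snd e) (T s)" if "s \<le> Suc N" for s
    using that by (auto simp: y_def T_def linepath_def)
  have ys: "(y s, y (Suc s)) \<in> m" if "s \<le> N" for s
    using chain that unfolding Let_def y_def[symmetric] by force
  have "(linepath (fst e) (snd e) (T s), linepath (fst e) (snd e) (T (Suc s))) \<in> m"
    if "s \<le> N" for s
    using ys[OF that] that y[of s] y[of "Suc s"] by simp
  then have "pieces (fst e, snd e) m
      = (\<lambda>s. (linepath (fst e) (snd e) (T s), linepath (fst e) (snd e) (T (Suc s)))) ` {..N}"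
    by (rule pieces_of_chain[OF assms(2) T])
  then show ?thesis
    using sum_elen_chain[OF T assms(4)] by simp
qed

section \<open>Configurations on the torus\<close>

lemma tcl_eq_iff: "tcl S X = tcl S Y \<longleftrightarrow> (\<forall>e\<in>S. \<forall>i. X e $ i - Y e $ i \<in> \<int>)"
proof -
  have frac_eq_iff: "frac a = frac b \<longleftrightarrow> a - b \<in> \<int>" for a b :: real
    by (metis frac_diff_eq frac_diff_zero frac_eq_0_iff)
  show ?thesis
    by (auto simp: tcl_def fun_eq_iff vec_eq_iff frac_eq_iff split: if_splits)
qed

lemma tcl_add_Ints:
  assumes "\<And>e i. e \<in> S \<Longrightarrow> X e $ i - Y e $ i \<in> \<int>"
  shows "tcl S (\<lambda>e. X e + Z e) = tcl S (\<lambda>e. Y e + Z e)"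
  using assms unfolding tcl_eq_iff by (simp add: algebra_simps)

lemma tcl_add_tcl: "tcl S (\<lambda>e. tcl S X e + Y e) = tcl S (\<lambda>e. X e + Y e)"
  by (auto simp: tcl_def fun_eq_iff vec_eq_iff)

lemma tcl_in_Gsp [simp]: "tcl S X \<in> Gsp S"
  by (simp add: Gsp_def)

lemma tcl_Gsp: "q \<in> Gsp S \<Longrightarrow> tcl S q = q"
  by (auto simp: Gsp_def tcl_def fun_eq_iff vec_eq_iff)

lemma frac_sum_frac: "finite A \<Longrightarrow> frac (\<Sum>x\<in>A. frac (g x)) = frac (\<Sum>x\<in>A. g x)"
  by (induction A rule: finite_induct) (auto, metis frac_add_simps(2))

lemma Ubox_outside: "\<xi> \<in> Ubox l \<delta> \<Longrightarrow> e \<notin> l \<Longrightarrow> \<xi> e = 0"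
  unfolding Ubox_def by blast

lemma Ubox_bounds:
  "\<xi> \<in> Ubox l \<delta> \<Longrightarrow> e \<in> l \<Longrightarrow> - 1/2 + \<delta>/2 < \<xi> e $ i \<and> \<xi> e $ i < 1/2 - \<delta>/2"
  by (simp add: Ubox_def)

lemma Ubox_antimono:
  assumes "0 \<le> \<delta>"
  shows "Ubox l \<delta> \<subseteq> Ubox l 0"
proof
  fix \<xi> assume \<xi>: "\<xi> \<in> Ubox l \<delta>"
  have "\<forall>e\<in>l. \<forall>i. - 1/2 + 0/2 < \<xi> e $ i \<and> \<xi> e $ i < 1/2 - 0/2"
  proof (intro ballI allI)
    fix e i assume "e \<in> l"
    then show "- 1/2 + 0/2 < \<xi> e $ i \<and> \<xi> e $ i < 1/2 - 0/2"
      using Ubox_bounds[OF \<xi>, of e i] assms by linarith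
  qed
  moreover have "\<forall>e. e \<notin> l \<longrightarrow> \<xi> e = 0" using Ubox_outside[OF \<xi>] by blast
  ultimately show "\<xi> \<in> Ubox l 0" unfolding Ubox_def by blast
qed

lemma Ubox_tcl_inj:
  assumes "\<xi> \<in> Ubox l 0" "\<eta> \<in> Ubox l 0" "tcl l \<xi> = tcl l \<eta>"
  shows "\<xi> = \<eta>"
proof
  fix e show "\<xi> e = \<eta> e"
  proof (cases "e \<in> l")
    case True
    have "\<xi> e $ i = \<eta> e $ i" for i
    proof -
      have "\<xi> e $ i - \<eta> e $ i \<in> \<int>" using assms(3) True unfolding tcl_eq_iff by blast
      moreover have "\<bar>\<xi> e $ i - \<eta> e $ i\<bar> < 1"
        using Ubox_bounds[OF assms(1) True, of i] Ubox_bounds[OF assms(2) True, of i] by linarith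
      ultimately show ?thesis using Ints_nonzero_abs_less1 by fastforce
    qed
    then show ?thesis by (simp add: vec_eq_iff)
  next
    case False
    then show ?thesis using Ubox_outside assms(1,2) by metis
  qed
qed

lemma Ubox_scaleR:
  assumes "\<xi> \<in> Ubox l \<delta>1" "c > 0" "c * (1 - \<delta>1) = 1 - \<delta>2"
  shows "(\<lambda>e. c *\<^sub>R \<xi> e) \<in> Ubox l \<delta>2"
  unfolding Ubox_def
proof (intro CollectI conjI ballI allI impI)
  fix e i assume e: "e \<in> l"
  have "c * (- 1/2 + \<delta>1/2) < c * \<xi> e $ i" "c * \<xi> e $ i < c * (1/2 - \<delta>1/2)"
    using Ubox_bounds[OF assms(1) e, of i] assms(2) by simp_all
  moreover have "c * (- 1/2 + \<delta>1/2) = - 1/2 + \<delta>2/2" "c * (1/2 - \<delta>1/2) = 1/2 - \<delta>2/2"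
    using assms(3) by (simp_all add: algebra_simps)
  ultimately show "- 1/2 + \<delta>2/2 < (c *\<^sub>R \<xi> e) $ i" "(c *\<^sub>R \<xi> e) $ i < 1/2 - \<delta>2/2"
    by simp_all
qed (simp add: Ubox_outside[OF assms(1)])

lemma Sml_add: "Sml m l (\<lambda>e. A e + B e) = (\<lambda>f. Sml m l A f + Sml m l B f)"
  unfolding Sml_def by (simp add: sum.distrib scaleR_add_right)

lemma Sml_scaleR: "Sml m l (\<lambda>e. t *\<^sub>R A e) = (\<lambda>f. t *\<^sub>R Sml m l A f)"
  unfolding Sml_def by (simp add: scaleR_sum_right ac_simps)

lemma Sml_cong: "(\<And>e. e \<in> l \<Longrightarrow> A e = B e) \<Longrightarrow> Sml m l A = Sml m l B"
  unfolding Sml_def by (intro ext sum.cong) auto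

text \<open>A segment starting in \<open>(-1/2, 1/2)\<close> that stays within distance \<open>< 1/2\<close> of \<open>\<int>\<close> never meets
  \<open>\<int> + 1/2\<close>, so it cannot leave \<open>(-1/2, 1/2)\<close>.\<close>

lemma abs_less_half_along_segment:
  fixes \<alpha> \<beta> :: real
  assumes "\<bar>\<alpha>\<bar> < 1/2" and near: "\<forall>t\<in>{0..1}. \<exists>\<zeta>. \<bar>\<zeta>\<bar> < 1/2 \<and> \<alpha> + t * \<beta> - \<zeta> \<in> \<int>"
  shows "\<bar>\<alpha> + \<beta>\<bar> < 1/2"
proof (rule ccontr)
  assume far: "\<not> \<bar>\<alpha> + \<beta>\<bar> < 1/2"
  have "\<exists>t\<in>{0..1}. \<bar>\<alpha> + t * \<beta>\<bar> = 1/2"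
  proof (cases "\<alpha> + \<beta> \<ge> 1/2")
    case True
    then have "\<beta> > 0" using assms(1) by linarith
    then show ?thesis
      using True assms(1) by (intro bexI[of _ "(1/2 - \<alpha>) / \<beta>"]) (auto simp: divide_simps)
  next
    case False
    then have "\<alpha> + \<beta> \<le> - 1/2" "\<beta> < 0" using far assms(1) by linarith+
    then show ?thesis
      using assms(1) by (intro bexI[of _ "(- 1/2 - \<alpha>) / \<beta>"]) (auto simp: divide_simps)
  qed
  then obtain t \<zeta> where "\<bar>\<alpha> + t * \<beta>\<bar> = 1/2" "\<bar>\<zeta>\<bar> < 1/2" "\<alpha> + t * \<beta> - \<zeta> \<in> \<int>"
    using near by blast
  moreover from this have "\<alpha> + t * \<beta> - \<zeta> = 0"
    by (intro Ints_nonzero_abs_less1) linarith+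
  ultimately show False by linarith
qed

lemma Ubox_segment_endpoint:
  assumes "\<xi> \<in> Ubox l \<delta>" "0 \<le> \<delta>" "\<forall>e. e \<notin> l \<longrightarrow> a e = 0"
    and path: "\<forall>t\<in>{0..1}. \<exists>\<zeta>\<in>Ubox l \<delta>. tcl l (\<lambda>e. \<xi> e + t *\<^sub>R a e) = tcl l \<zeta>"
  shows "(\<lambda>e. \<xi> e + a e) \<in> Ubox l 0"
  unfolding Ubox_def
proof (intro CollectI conjI ballI allI impI)
  fix e i assume e: "e \<in> l"
  have "\<bar>\<xi> e $ i + a e $ i\<bar> < 1/2"
  proof (rule abs_less_half_along_segment)
    show "\<bar>\<xi> e $ i\<bar> < 1/2" using Ubox_bounds[OF assms(1) e, of i] assms(2) by linarith
    show "\<forall>t\<in>{0..1}. \<exists>\<zeta>. \<bar>\<zeta>\<bar> < 1/2 \<and> \<xi> e $ i + t * a e $ i - \<zeta> \<in> \<int>"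
    proof
      fix t :: real assume "t \<in> {0..1}"
      then obtain \<zeta> where "\<zeta> \<in> Ubox l \<delta>" "tcl l (\<lambda>e. \<xi> e + t *\<^sub>R a e) = tcl l \<zeta>" using path by blast
      then show "\<exists>\<zeta>. \<bar>\<zeta>\<bar> < 1/2 \<and> \<xi> e $ i + t * a e $ i - \<zeta> \<in> \<int>"
        using Ubox_bounds[of \<zeta> l \<delta> e i] e assms(2) unfolding tcl_eq_iff
        by (intro exI[of _ "\<zeta> e $ i"]) auto
    qed
  qed
  then have "- (1/2) < \<xi> e $ i + a e $ i \<and> \<xi> e $ i + a e $ i < 1/2"
    unfolding abs_less_iff by linarith
  then show "- 1/2 + 0/2 < (\<xi> e + a e) $ i" "(\<xi> e + a e) $ i < 1/2 - 0/2"
    by auto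
qed (use assms(1,3) Ubox_outside in auto)

section \<open>Calculus on configuration spaces\<close>

lemma Ck_affine:
  assumes "\<And>X t V e. g (\<lambda>e'. X e' + t *\<^sub>R V e') e = g X e + t *\<^sub>R D V e"
    and "\<And>e. e \<in> S \<Longrightarrow> continuous_on U (\<lambda>X. g X e)"
  shows "Ck k S U g"
  using assms
proof (induction k arbitrary: g D)
  case (Suc k)
  have "has_partials S U g (\<lambda>f i X. D (bvec f i))"
    unfolding has_partials_def Suc.prems(1)
    by (intro ballI allI) (auto intro!: derivative_eq_intros)
  moreover have "Ck k S U (\<lambda>X. D (bvec f i))" for f i
    by (rule Suc.IH[of _ "\<lambda>V e. 0"]) simp_all
  ultimately show ?case using Suc.prems(2) by auto
qed simp

lemma tsmooth_on_cong: "(\<And>x. x \<in> A \<Longrightarrow> F x = G x) \<Longrightarrow> tsmooth_on m A F \<Longrightarrow> tsmooth_on m A G"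
  unfolding tsmooth_on_def by metis

lemma continuous_on_Sml:
  "(\<And>e. continuous_on U (\<lambda>X. Z X e)) \<Longrightarrow> continuous_on U (\<lambda>X. Sml m l (Z X) f)"
  unfolding Sml_def by (intro continuous_intros)

lemma continuous_on_cfg_apply: "continuous_on U (\<lambda>X :: ('d::finite,'n::finite) cfg. X f)"
  by (rule continuous_on_subset[OF continuous_on_product_coordinates]) simp

lemma eventually_line_in_openin:
  fixes X V :: "('d::finite,'n::finite) cfg"
  assumes "openin (top_of_set (Wsp m)) U" "X \<in> U" "V \<in> Wsp m"
  shows "eventually (\<lambda>t. (\<lambda>e. X e + t *\<^sub>R V e) \<in> U) (nhds 0)"
proof -
  obtain T where T: "open T" "U = Wsp m \<inter> T" using assms(1) unfolding openin_open by blast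
  let ?L = "\<lambda>t::real. (\<lambda>e. X e + t *\<^sub>R V e)"
  have "continuous_on UNIV ?L"
    by (intro continuous_on_coordinatewise_then_product continuous_intros)
  then have "open (?L -` T)"
    by (intro continuous_open_vimage[OF T(1)]) (simp add: continuous_on_eq_continuous_at)
  moreover have "0 \<in> ?L -` T" "\<forall>t. ?L t \<in> Wsp m"
    using assms(2,3) T(2) by (auto simp: Wsp_def)
  ultimately show ?thesis unfolding eventually_nhds using T(2) by blast
qed

lemma eventually_eq_if_Ints_valued:
  fixes \<phi> :: "real \<Rightarrow> real ^ 'n::finite"
  assumes "isCont \<phi> 0" and "eventually (\<lambda>t. \<forall>i. \<phi> t $ i - \<phi> 0 $ i \<in> \<int>) (nhds 0)"
  shows "eventually (\<lambda>t. \<phi> t = \<phi> 0) (nhds 0)"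
proof -
  have "eventually (\<lambda>t. dist (\<phi> t) (\<phi> 0) < 1) (at 0)"
    using assms(1) unfolding isCont_def by (rule tendstoD) simp
  then have "eventually (\<lambda>t. dist (\<phi> t) (\<phi> 0) < 1) (nhds 0)"
    unfolding eventually_at_filter by (rule eventually_mono) auto
  with assms(2) show ?thesis
  proof eventually_elim
    case (elim t)
    have "\<phi> t $ i - \<phi> 0 $ i = 0" for i
    proof (rule Ints_nonzero_abs_less1)
      show "\<phi> t $ i - \<phi> 0 $ i \<in> \<int>" using elim(1) by blast
      show "\<bar>\<phi> t $ i - \<phi> 0 $ i\<bar> < 1"
        using component_le_norm_cart[of "\<phi> t - \<phi> 0" i] elim(2) by (simp add: dist_norm)
    qed
    then show ?case by (simp add: vec_eq_iff)
  qed
qed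

lemma vector_derivative_eq_if_diff_Ints_valued:
  fixes f g :: "real \<Rightarrow> real ^ 'n::finite"
  assumes f: "(f has_vector_derivative f') (at 0)" and g: "(g has_vector_derivative g') (at 0)"
    and Ints: "eventually (\<lambda>t. \<forall>i. (f t - g t) $ i \<in> \<int>) (nhds 0)"
  shows "f' = g'"
proof -
  define d where "d t = f t - g t" for t
  have f_split: "f t = g t + d t" for t by (simp add: d_def)
  have "isCont d 0"
    unfolding d_def using f g by (intro isCont_diff has_vector_derivative_continuous)
  moreover have "eventually (\<lambda>t. \<forall>i. d t $ i - d 0 $ i \<in> \<int>) (nhds 0)"
    using Ints eventually_nhds_x_imp_x[OF Ints]
    by (auto simp: d_def elim!: eventually_mono intro: Ints_diff)
  ultimately have "eventually (\<lambda>t. d t = d 0) (nhds 0)"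
    by (rule eventually_eq_if_Ints_valued)
  then have "eventually (\<lambda>t. f t = g t + d 0) (nhds 0)"
    by (rule eventually_mono) (simp add: f_split)
  then have "(f has_vector_derivative f') (at 0) \<longleftrightarrow> ((\<lambda>t. g t + d 0) has_vector_derivative f') (at 0)"
    using f_split[of 0] by (intro has_vector_derivative_cong_ev) simp_all
  then have "((\<lambda>t. g t + d 0) has_vector_derivative f') (at 0)" using f by simp
  moreover have "((\<lambda>t. g t + d 0) has_vector_derivative g') (at 0)"
    using g by (auto intro!: derivative_eq_intros)
  ultimately show ?thesis by (rule vector_derivative_unique_at)
qed

section \<open>The map F\<close>

locale refined_lattice =
  fixes l m :: "('d::{finite,linorder}) edge set" and R :: nat and ch :: "'d edge \<Rightarrow> 'd edge"
  assumes lattice_l: "lattice l" and lattice_m: "lattice m" and R_pos: "R > 0"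
    and subdiv_refine: "subdiv (refine l R) m"
    and chosen_piece: "\<forall>e\<in>l. ch e \<in> pieces e (refine l R)"
begin

abbreviation chosen_pieces :: "'d edge \<Rightarrow> 'd edge set" where
  "chosen_pieces e \<equiv> pieces (ch e) m"

lemma finite_l: "finite l" and finite_m: "finite m"
  using lattice_l lattice_m lattice_finite by auto

lemma finite_pieces: "finite (pieces e m)"
  using finite_m by (simp add: pieces_def)

lemma pieces_mem: "f \<in> pieces e m \<Longrightarrow> f \<in> m"
  by (simp add: pieces_def)

lemma elen_pos: "e \<in> l \<Longrightarrow> elen e > 0"
  using lattice_edge_nondegenerate[OF lattice_l, of e] by (simp add: elen_def)

lemma chosen_piece_nondegenerate_elen:
  assumes e: "e \<in> l"
  shows "fst (ch e) \<noteq> snd (ch e)" and "elen (ch e) = elen e / real R"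
proof -
  have "ch e \<in> refine l R" and sub: "seg (ch e) \<subseteq> seg e"
    using chosen_piece e by (auto simp: pieces_def)
  then obtain e' i where e': "e' \<in> l" "i < R"
    and ch: "ch e = (linepath (fst e') (snd e') (i / R), linepath (fst e') (snd e') (Suc i / R))"
    by (auto simp: refine_def linepath_def)
  have ne': "fst e' \<noteq> snd e'" using lattice_edge_nondegenerate[OF lattice_l e'(1)] .
  have diff: "snd (ch e) - fst (ch e) = (1 / R) *\<^sub>R (snd e' - fst e')"
    using R_pos by (simp add: ch linepath_diff diff_divide_distrib[symmetric])
  then show ne: "fst (ch e) \<noteq> snd (ch e)" using ne' R_pos by auto
  have "real i / R \<in> {0..1}" "real (Suc i) / R \<in> {0..1}" using e'(2) by (auto simp: divide_simps)
  then have "seg (ch e) \<subseteq> seg e'"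
    unfolding seg_def ch by (intro closed_segment_subset) (simp_all add: linepath_in_path)
  then have "e' = e" using lattice_unique_superedge[OF lattice_l e'(1) e ne] sub by blast
  then show "elen (ch e) = elen e / real R"
    using diff R_pos by (simp add: elen_def)
qed

lemma sum_elen_chosen_pieces: "e \<in> l \<Longrightarrow> (\<Sum>f\<in>chosen_pieces e. elen f) = elen e / real R"
  using subdiv_sum_elen_pieces[OF subdiv_refine lattice_m] chosen_piece
    chosen_piece_nondegenerate_elen
  by (auto simp: pieces_def)

lemma owner_chosen_piece:
  assumes "e \<in> l" "f \<in> chosen_pieces e"
  shows "{e' \<in> l. f \<in> pieces e' m} = {e}"
proof -
  have "seg (ch e) \<subseteq> seg e" using chosen_piece assms(1) by (auto simp: pieces_def)
  then have f: "f \<in> m" "seg f \<subseteq> seg e" using assms(2) by (auto simp: pieces_def)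
  moreover have "fst f \<noteq> snd f" using lattice_edge_nondegenerate[OF lattice_m f(1)] .
  ultimately show ?thesis
    using lattice_unique_superedge[OF lattice_l _ assms(1)] assms(1) by (auto simp: pieces_def)
qed

lemma chosen_pieces_disjoint:
  "e \<in> l \<Longrightarrow> e' \<in> l \<Longrightarrow> f \<in> chosen_pieces e \<Longrightarrow> f \<in> chosen_pieces e' \<Longrightarrow> e = e'"
  using owner_chosen_piece by blast

definition phi_lin :: "('d,'n::finite) cfg \<Rightarrow> ('d,'n) cfg" where
  "phi_lin Y = (\<lambda>e. if e \<in> l then \<Sum>f\<in>chosen_pieces e. Y f else 0)"

lemma phi_tcl: "phi l m R ch (tcl m Y) = tcl l (phi_lin Y)"
proof
  fix e
  show "phi l m R ch (tcl m Y) e = tcl l (phi_lin Y) e"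
  proof (cases "e \<in> l")
    case True
    then have "ch e \<in> refine l R" using chosen_piece by (auto simp: pieces_def)
    moreover have "tcl m Y f = (\<chi> i. frac (Y f $ i))" if "f \<in> chosen_pieces e" for f
      using pieces_mem[OF that] by (simp add: tcl_def)
    ultimately have "phi l m R ch (tcl m Y) e = (\<chi> i. frac (\<Sum>f\<in>chosen_pieces e. frac (Y f $ i)))"
      using True by (simp add: phi_def chi_def gconf_def tcl_def sum_component)
    also have "\<dots> = tcl l (phi_lin Y) e"
      using True by (simp add: frac_sum_frac finite_pieces tcl_def phi_lin_def sum_component)
    finally show ?thesis .
  qed (simp add: phi_def chi_def tcl_def)
qed

lemma phi_lin_add_scaleR:
  "phi_lin (\<lambda>f. X f + t *\<^sub>R V f) = (\<lambda>e. phi_lin X e + t *\<^sub>R phi_lin V e)"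
  by (simp add: phi_lin_def fun_eq_iff sum.distrib scaleR_sum_right)

lemma phi_lin_Sml: "phi_lin (Sml m l \<xi>) = (\<lambda>e. if e \<in> l then (1 / real R) *\<^sub>R \<xi> e else 0)"
proof
  fix e
  show "phi_lin (Sml m l \<xi>) e = (if e \<in> l then (1 / real R) *\<^sub>R \<xi> e else 0)"
  proof (cases "e \<in> l")
    case True
    then have "phi_lin (Sml m l \<xi>) e = (\<Sum>f\<in>chosen_pieces e. (elen f / elen e) *\<^sub>R \<xi> e)"
      by (simp add: phi_lin_def Sml_def owner_chosen_piece cong: sum.cong)
    also have "\<dots> = ((\<Sum>f\<in>chosen_pieces e. elen f) / elen e) *\<^sub>R \<xi> e"
      by (simp add: scaleR_sum_left sum_divide_distrib)
    finally show ?thesis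
      using True sum_elen_chosen_pieces elen_pos[OF True] by simp
  qed (simp add: phi_lin_def)
qed

lemma Vt_iff: "q \<in> Vt l m R ch \<delta> \<longleftrightarrow> q \<in> Gsp m \<and> (\<exists>\<xi>\<in>Ubox l \<delta>. phi l m R ch q = tcl l \<xi>)"
  unfolding Vt_def Vb_def by auto

lemma phiu_eqI: "\<xi> \<in> Ubox l 0 \<Longrightarrow> phi l m R ch q = tcl l \<xi> \<Longrightarrow> phiu l m R ch q = \<xi>"
  unfolding phiu_def by (rule the_equality) (auto intro: Ubox_tcl_inj)

lemma phiu_in_Ubox:
  assumes "q \<in> Vt l m R ch \<delta>" "0 \<le> \<delta>"
  shows "phiu l m R ch q \<in> Ubox l \<delta>" and "phi l m R ch q = tcl l (phiu l m R ch q)"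
proof -
  obtain \<xi> where "\<xi> \<in> Ubox l \<delta>" "phi l m R ch q = tcl l \<xi>" using assms(1) Vt_iff by blast
  moreover from this have "phiu l m R ch q = \<xi>" using phiu_eqI Ubox_antimono[OF assms(2)] by blast
  ultimately show "phiu l m R ch q \<in> Ubox l \<delta>" "phi l m R ch q = tcl l (phiu l m R ch q)" by auto
qed

lemma phi_lin_minus_phiu_Ints:
  assumes "tcl m X \<in> Vt l m R ch \<delta>" "0 \<le> \<delta>" "e \<in> l"
  shows "phi_lin X e $ i - phiu l m R ch (tcl m X) e $ i \<in> \<int>"
  using phiu_in_Ubox(2)[OF assms(1,2)] assms(3) by (simp add: phi_tcl tcl_eq_iff)

definition shear :: "real \<Rightarrow> real \<Rightarrow> real" where
  "shear h1 h = real R * (h / h1 - 1)"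

lemma one_plus_shear: "1 + shear h1 h / real R = h / h1"
  using R_pos by (simp add: shear_def)

lemma Fmap_eq:
  "Fmap l m R ch h1 h q = tcl m (\<lambda>f. q f + shear h1 h *\<^sub>R Sml m l (phiu l m R ch q) f)"
  by (simp add: Fmap_def tadd_def shear_def)

lemma Fmap_in_Vt:
  assumes ratio: "h / h1 > 0" and \<delta>: "0 \<le> \<delta>1" "0 \<le> \<delta>2" "h * (1 - \<delta>1) = h1 * (1 - \<delta>2)"
    and q: "q \<in> Vt l m R ch \<delta>1"
  shows "Fmap l m R ch h1 h q \<in> Vt l m R ch \<delta>2"
    and "phiu l m R ch (Fmap l m R ch h1 h q) = (\<lambda>e. (h / h1) *\<^sub>R phiu l m R ch q e)"
proof -
  define \<xi> where "\<xi> = phiu l m R ch q"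
  have \<xi>: "\<xi> \<in> Ubox l \<delta>1" using phiu_in_Ubox[OF q \<delta>(1)] by (simp add: \<xi>_def)
  have q_eq: "tcl m q = q" using q by (simp add: Vt_iff tcl_Gsp)
  have "phi l m R ch (Fmap l m R ch h1 h q)
      = tcl l (\<lambda>e. phi_lin q e + shear h1 h *\<^sub>R phi_lin (Sml m l \<xi>) e)"
    by (simp add: Fmap_eq phi_tcl phi_lin_add_scaleR \<xi>_def)
  also have "\<dots> = tcl l (\<lambda>e. \<xi> e + shear h1 h *\<^sub>R phi_lin (Sml m l \<xi>) e)"
    using phi_lin_minus_phiu_Ints[of q, unfolded q_eq, OF q \<delta>(1)]
    by (intro tcl_add_Ints) (simp add: \<xi>_def)
  also have "(\<lambda>e. \<xi> e + shear h1 h *\<^sub>R phi_lin (Sml m l \<xi>) e) = (\<lambda>e. (h / h1) *\<^sub>R \<xi> e)"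
  proof
    fix e
    have "\<xi> e + shear h1 h *\<^sub>R phi_lin (Sml m l \<xi>) e = (1 + shear h1 h / R) *\<^sub>R \<xi> e"
      using Ubox_outside[OF \<xi>, of e] by (cases "e \<in> l") (simp_all add: phi_lin_Sml scaleR_add_left)
    then show "\<xi> e + shear h1 h *\<^sub>R phi_lin (Sml m l \<xi>) e = (h / h1) *\<^sub>R \<xi> e"
      by (simp add: one_plus_shear)
  qed
  finally have phi_F: "phi l m R ch (Fmap l m R ch h1 h q) = tcl l (\<lambda>e. (h / h1) *\<^sub>R \<xi> e)" .
  have "h1 \<noteq> 0" using ratio by auto
  then have "(h / h1) * (1 - \<delta>1) = 1 - \<delta>2" using \<delta>(3) by (simp add: field_simps)
  then have scaled: "(\<lambda>e. (h / h1) *\<^sub>R \<xi> e) \<in> Ubox l \<delta>2" using Ubox_scaleR[OF \<xi> ratio] by blast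
  show "Fmap l m R ch h1 h q \<in> Vt l m R ch \<delta>2"
    using phi_F scaled by (auto simp: Vt_iff Fmap_eq)
  show "phiu l m R ch (Fmap l m R ch h1 h q) = (\<lambda>e. (h / h1) *\<^sub>R phiu l m R ch q e)"
    using phiu_eqI[OF _ phi_F] scaled Ubox_antimono[OF \<delta>(2)] by (auto simp: \<xi>_def)
qed

lemma Fmap_Fmap:
  assumes ratio: "h / h1 > 0" and \<delta>: "0 \<le> \<delta>1" "0 \<le> \<delta>2" "h * (1 - \<delta>1) = h1 * (1 - \<delta>2)"
    and q: "q \<in> Vt l m R ch \<delta>1"
  shows "Fmap l m R ch h h1 (Fmap l m R ch h1 h q) = q"
proof -
  define \<xi> where "\<xi> = phiu l m R ch q"
  have "h \<noteq> 0" "h1 \<noteq> 0" using ratio by auto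
  then have shear_cancel: "shear h1 h + shear h h1 * h / h1 = 0"
    by (simp add: shear_def field_simps)
  have "Fmap l m R ch h h1 (Fmap l m R ch h1 h q)
      = tcl m (\<lambda>f. q f + shear h1 h *\<^sub>R Sml m l \<xi> f
                     + shear h h1 *\<^sub>R Sml m l (\<lambda>e. (h / h1) *\<^sub>R \<xi> e) f)"
    unfolding Fmap_eq[of h h1] Fmap_in_Vt(2)[OF assms] by (simp add: Fmap_eq tcl_add_tcl \<xi>_def)
  also have "\<dots> = tcl m (\<lambda>f. q f + (shear h1 h + shear h h1 * h / h1) *\<^sub>R Sml m l \<xi> f)"
    by (simp add: Sml_scaleR algebra_simps)
  also have "\<dots> = q" using q by (simp add: shear_cancel Vt_iff tcl_Gsp)
  finally show ?thesis .
qed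

lemma Fmap_bij_betw:
  assumes ratio: "h / h1 > 0" and \<delta>: "0 \<le> \<delta>1" "0 \<le> \<delta>2" "h * (1 - \<delta>1) = h1 * (1 - \<delta>2)"
  shows "bij_betw (Fmap l m R ch h1 h) (Vt l m R ch \<delta>1) (Vt l m R ch \<delta>2)"
    and "\<And>q. q \<in> Vt l m R ch \<delta>2 \<Longrightarrow>
           inv_into (Vt l m R ch \<delta>1) (Fmap l m R ch h1 h) q = Fmap l m R ch h h1 q"
proof -
  have ratio': "h1 / h > 0" using ratio by (auto simp: zero_less_divide_iff)
  note maps_to = Fmap_in_Vt(1)[OF ratio \<delta>]
    and maps_back = Fmap_in_Vt(1)[OF ratio' \<delta>(2,1) \<delta>(3)[symmetric]]
  note inv_left = Fmap_Fmap[OF ratio \<delta>]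
    and inv_right = Fmap_Fmap[OF ratio' \<delta>(2,1) \<delta>(3)[symmetric]]
  show bij: "bij_betw (Fmap l m R ch h1 h) (Vt l m R ch \<delta>1) (Vt l m R ch \<delta>2)"
    by (rule bij_betw_byWitness[where f' = "Fmap l m R ch h h1"])
      (use maps_to maps_back inv_left inv_right in auto)
  show "inv_into (Vt l m R ch \<delta>1) (Fmap l m R ch h1 h) q = Fmap l m R ch h h1 q"
    if "q \<in> Vt l m R ch \<delta>2" for q
    using that maps_back inv_right by (intro inv_into_f_eq[OF bij_betw_imp_inj_on[OF bij]]) auto
qed

lemma continuous_on_phi_lin: "continuous_on U (\<lambda>X. phi_lin X e)"
  by (cases "e \<in> l") (simp_all add: phi_lin_def continuous_on_cfg_apply continuous_on_sum)

text \<open>Near a point of \<open>Vt\<close>, the coordinate \<open>phiu \<circ> tcl m\<close> is \<open>phi_lin\<close> minus a constant integer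
  offset, so \<open>Fmap\<close> lifts to an affine map of \<open>(R^n)^m\<close>.\<close>

definition lift_offset :: "('d,'n::finite) cfg \<Rightarrow> ('d,'n) cfg" where
  "lift_offset X = (\<lambda>e. phi_lin X e - phiu l m R ch (tcl m X) e)"

definition lift_domain :: "real \<Rightarrow> ('d,'n::finite) cfg \<Rightarrow> ('d,'n) cfg set" where
  "lift_domain \<delta> K = {Y \<in> Wsp m. (\<lambda>e. phi_lin Y e - K e) \<in> Ubox l \<delta>}"

definition Fmap_lift :: "real \<Rightarrow> real \<Rightarrow> ('d,'n::finite) cfg \<Rightarrow> ('d,'n) cfg \<Rightarrow> ('d,'n) cfg" where
  "Fmap_lift h1 h K Y = (\<lambda>f. Y f + shear h1 h *\<^sub>R Sml m l (\<lambda>e. phi_lin Y e - K e) f)"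

lemma lift_offset_Ints:
  assumes "tcl m X \<in> Vt l m R ch \<delta>" "0 \<le> \<delta>"
  shows "\<forall>e\<in>l. \<forall>i. lift_offset X e $ i \<in> \<int>"
  using phi_lin_minus_phiu_Ints[OF assms] by (simp add: lift_offset_def)

lemma lift_offset_outside:
  assumes "tcl m X \<in> Vt l m R ch \<delta>" "0 \<le> \<delta>"
  shows "\<forall>e. e \<notin> l \<longrightarrow> lift_offset X e = 0"
  using Ubox_outside[OF phiu_in_Ubox(1)[OF assms]] by (simp add: lift_offset_def phi_lin_def)

lemma mem_lift_domain_lift_offset:
  assumes "X \<in> Wsp m" "tcl m X \<in> Vt l m R ch \<delta>" "0 \<le> \<delta>"
  shows "X \<in> lift_domain \<delta> (lift_offset X)"
  using assms(1) phiu_in_Ubox(1)[OF assms(2,3)] by (simp add: lift_domain_def lift_offset_def)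

lemma Fmap_lift_lifts:
  assumes K: "\<forall>e\<in>l. \<forall>i. K e $ i \<in> \<int>" and "0 \<le> \<delta>" and Y: "Y \<in> lift_domain \<delta> K"
  shows "tcl m Y \<in> Vt l m R ch \<delta>"
    and "phiu l m R ch (tcl m Y) = (\<lambda>e. phi_lin Y e - K e)"
    and "tcl m (Fmap_lift h1 h K Y) = Fmap l m R ch h1 h (tcl m Y)"
proof -
  have U: "(\<lambda>e. phi_lin Y e - K e) \<in> Ubox l \<delta>" using Y by (simp add: lift_domain_def)
  have "phi l m R ch (tcl m Y) = tcl l (\<lambda>e. phi_lin Y e + 0)" by (simp add: phi_tcl)
  also have "\<dots> = tcl l (\<lambda>e. (phi_lin Y e - K e) + 0)"
    using K by (intro tcl_add_Ints) simp
  finally have phi_Y: "phi l m R ch (tcl m Y) = tcl l (\<lambda>e. phi_lin Y e - K e)" by simp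
  then show "tcl m Y \<in> Vt l m R ch \<delta>" using U by (auto simp: Vt_iff)
  show phiu_Y: "phiu l m R ch (tcl m Y) = (\<lambda>e. phi_lin Y e - K e)"
    using phiu_eqI[OF _ phi_Y] U Ubox_antimono[OF \<open>0 \<le> \<delta>\<close>] by blast
  show "tcl m (Fmap_lift h1 h K Y) = Fmap l m R ch h1 h (tcl m Y)"
    by (simp add: Fmap_eq phiu_Y tcl_add_tcl Fmap_lift_def)
qed

lemma lift_domain_openin:
  assumes "\<forall>e. e \<notin> l \<longrightarrow> K e = 0"
  shows "openin (top_of_set (Wsp m)) (lift_domain \<delta> (K :: ('d,'n::finite) cfg))"
proof -
  define T :: "('d,'n) cfg set" where "T = (\<Inter>e\<in>l. \<Inter>i\<in>UNIV.
      {Y. - 1/2 + \<delta>/2 < phi_lin Y e $ i - K e $ i} \<inter> {Y. phi_lin Y e $ i - K e $ i < 1/2 - \<delta>/2})"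
  have cont: "continuous_on UNIV (\<lambda>Y::('d,'n) cfg. phi_lin Y e $ i - K e $ i)" for e i
    by (intro continuous_intros continuous_on_phi_lin)
  have "open T"
    unfolding T_def
  proof (intro open_INT[OF finite_l] ballI open_INT open_Int)
    fix e i
    show "open {Y::('d,'n) cfg. - 1/2 + \<delta>/2 < phi_lin Y e $ i - K e $ i}"
      by (rule open_Collect_less[OF continuous_on_const cont])
    show "open {Y::('d,'n) cfg. phi_lin Y e $ i - K e $ i < 1/2 - \<delta>/2}"
      by (rule open_Collect_less[OF cont continuous_on_const])
  qed simp
  moreover have "(\<lambda>e. phi_lin Y e - K e) \<in> Ubox l \<delta> \<longleftrightarrow> Y \<in> T" for Y
  proof -
    have "\<forall>e. e \<notin> l \<longrightarrow> phi_lin Y e - K e = 0" using assms by (simp add: phi_lin_def)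
    then have "(\<lambda>e. phi_lin Y e - K e) \<in> Ubox l \<delta> \<longleftrightarrow>
        (\<forall>e\<in>l. \<forall>i. - 1/2 + \<delta>/2 < phi_lin Y e $ i - K e $ i \<and> phi_lin Y e $ i - K e $ i < 1/2 - \<delta>/2)"
      by (simp add: Ubox_def del: split_paired_All)
    then show ?thesis by (simp add: T_def)
  qed
  then have "lift_domain \<delta> K = Wsp m \<inter> T" by (auto simp: lift_domain_def)
  ultimately show ?thesis unfolding openin_open by blast
qed

lemma Fmap_lift_affine:
  "Fmap_lift h1 h K (\<lambda>e'. X e' + t *\<^sub>R V e') f
     = Fmap_lift h1 h K X f + t *\<^sub>R (V f + shear h1 h *\<^sub>R Sml m l (phi_lin V) f)"
proof -
  have shifted: "(\<lambda>e. phi_lin (\<lambda>e'. X e' + t *\<^sub>R V e') e - K e)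
      = (\<lambda>e. (phi_lin X e - K e) + t *\<^sub>R phi_lin V e)"
    by (simp add: phi_lin_add_scaleR algebra_simps)
  show ?thesis unfolding Fmap_lift_def shifted Sml_add Sml_scaleR by (simp add: algebra_simps)
qed

lemma continuous_on_Fmap_lift: "continuous_on U (\<lambda>Y. Fmap_lift h1 h K Y f)"
  unfolding Fmap_lift_def
  by (intro continuous_intros continuous_on_cfg_apply continuous_on_Sml continuous_on_phi_lin)

lemma Fmap_tsmooth_on:
  assumes "0 \<le> \<delta>"
  shows "tsmooth_on m (Vt l m R ch \<delta>) (Fmap l m R ch h1 h :: ('d,'n::finite) cfg \<Rightarrow> _)"
  unfolding tsmooth_on_def
proof (intro ballI impI)
  fix X :: "('d,'n) cfg" assume X: "X \<in> Wsp m" "tcl m X \<in> Vt l m R ch \<delta>"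
  note offset = lift_offset_Ints[OF X(2) assms] lift_offset_outside[OF X(2) assms]
    mem_lift_domain_lift_offset[OF X assms]
  let ?U = "lift_domain \<delta> (lift_offset X)"
  have "Ck k m ?U (Fmap_lift h1 h (lift_offset X))" for k
    by (rule Ck_affine[OF Fmap_lift_affine continuous_on_Fmap_lift])
  then have "smooth_on m ?U (Fmap_lift h1 h (lift_offset X))"
    by (simp add: smooth_on_def)
  moreover have "\<forall>Y\<in>?U. tcl m Y \<in> Vt l m R ch \<delta>
      \<and> tcl m (Fmap_lift h1 h (lift_offset X) Y) = Fmap l m R ch h1 h (tcl m Y)"
    using Fmap_lift_lifts(1,3)[OF offset(1) assms] by simp
  moreover have "X \<in> ?U" by (rule offset(3))
  moreover have "openin (top_of_set (Wsp m)) ?U" by (rule lift_domain_openin[OF offset(2)])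
  ultimately show "\<exists>U g. X \<in> U \<and> openin (top_of_set (Wsp m)) U \<and>
      (\<forall>Y\<in>U. tcl m Y \<in> Vt l m R ch \<delta> \<and> tcl m (g Y) = Fmap l m R ch h1 h (tcl m Y)) \<and>
      smooth_on m U g"
    by blast
qed

lemma Fmap_partial_derivative:
  fixes g :: "('d,'n::finite) cfg \<Rightarrow> ('d,'n) cfg"
  assumes "0 \<le> \<delta>" and U: "openin (top_of_set (Wsp m)) U" "X \<in> U"
    and g: "\<forall>Y\<in>U. tcl m Y \<in> Vt l m R ch \<delta> \<and> tcl m (g Y) = Fmap l m R ch h1 h (tcl m Y)"
    and Dg: "has_partials m U g Dg" and "f' \<in> m" "f \<in> m"
  shows "Dg f' j X f = bvec f' j f + shear h1 h *\<^sub>R Sml m l (phi_lin (bvec f' j)) f"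
proof -
  define V where "V = bvec f' j"
  define g0 where "g0 = Fmap_lift h1 h (lift_offset X)"
  define D where "D = V f + shear h1 h *\<^sub>R Sml m l (phi_lin V) f"
  let ?L = "\<lambda>t::real. (\<lambda>e. X e + t *\<^sub>R V e)"
  have V: "V \<in> Wsp m" using \<open>f' \<in> m\<close> by (simp add: V_def Wsp_def bvec_def)
  have X: "X \<in> Wsp m" "tcl m X \<in> Vt l m R ch \<delta>"
    using openin_subset[OF U(1)] U(2) g by auto
  note offset = lift_offset_Ints[OF X(2) \<open>0 \<le> \<delta>\<close>] lift_offset_outside[OF X(2) \<open>0 \<le> \<delta>\<close>]
    mem_lift_domain_lift_offset[OF X \<open>0 \<le> \<delta>\<close>]
  let ?U0 = "lift_domain \<delta> (lift_offset X)"
  have g_deriv: "((\<lambda>t. g (?L t) f) has_vector_derivative Dg f' j X f) (at 0)"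
    using Dg U(2) \<open>f' \<in> m\<close> \<open>f \<in> m\<close> unfolding has_partials_def V_def by blast
  have g0_deriv: "((\<lambda>t. g0 (?L t) f) has_vector_derivative D) (at 0)"
    unfolding g0_def D_def Fmap_lift_affine by (auto intro!: derivative_eq_intros)
  \<comment> \<open>both g and the affine map g0 lift Fmap near X, so they differ by an integer vector\<close>
  have "eventually (\<lambda>t. \<forall>i. (g (?L t) f - g0 (?L t) f) $ i \<in> \<int>) (nhds 0)"
    using eventually_line_in_openin[OF U V]
      eventually_line_in_openin[OF lift_domain_openin[OF offset(2)] offset(3) V]
  proof eventually_elim
    case (elim t)
    then have "tcl m (g (?L t)) = tcl m (g0 (?L t))"
      using g Fmap_lift_lifts(3)[OF offset(1) \<open>0 \<le> \<delta>\<close>] by (simp add: g0_def)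
    then show ?case using \<open>f \<in> m\<close> unfolding tcl_eq_iff by simp
  qed
  then have "Dg f' j X f = D"
    by (rule vector_derivative_eq_if_diff_Ints_valued[OF g_deriv g0_deriv])
  then show ?thesis by (simp add: D_def V_def)
qed

definition Fmap_jacobian :: "real \<Rightarrow> 'd edge \<times> 'n::finite \<Rightarrow> 'd edge \<times> 'n \<Rightarrow> real" where
  "Fmap_jacobian c x y =
     (bvec (fst y) (snd y) (fst x) + c *\<^sub>R Sml m l (phi_lin (bvec (fst y) (snd y))) (fst x)) $ snd x"

lemma phi_lin_bvec: "phi_lin (bvec f' j) e = (if e \<in> l \<and> f' \<in> chosen_pieces e then axis j 1 else 0)"
  using finite_pieces by (simp add: phi_lin_def bvec_def sum.delta')

lemma Fmap_jacobian_eq: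
  "Fmap_jacobian c (f, i) (f', j) = (if f = f' \<and> i = j then 1 else 0)
     + (if i = j then c * (\<Sum>e\<in>{e \<in> l. f \<in> pieces e m}.
                               if f' \<in> chosen_pieces e then elen f / elen e else 0) else 0)"
proof -
  have "Sml m l (phi_lin (bvec f' j)) f $ i = (if i = j then
      (\<Sum>e\<in>{e \<in> l. f \<in> pieces e m}. if f' \<in> chosen_pieces e then elen f / elen e else 0) else 0)"
    unfolding Sml_def phi_lin_bvec sum_component
    by (auto simp: axis_def intro!: sum.cong sum.neutral)
  then show ?thesis by (simp add: Fmap_jacobian_def bvec_def axis_def)
qed

lemma Fmap_jacobian_outside_chosen_pieces:
  assumes "\<forall>e\<in>l. f' \<notin> chosen_pieces e"
  shows "Fmap_jacobian c (f, i) (f', j) = (if (f, i) = (f', j) then 1 else 0)"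
  using assms by (auto simp: Fmap_jacobian_eq intro!: sum.neutral)

lemma Fmap_jacobian_chosen_pieces:
  assumes "e \<in> l" "f \<in> chosen_pieces e"
  shows "Fmap_jacobian c (f, i) (f', j) = (if (f, i) = (f', j) then 1 else 0)
           + (if i = j \<and> f' \<in> chosen_pieces e then c * elen f / elen e else 0)"
  using assms by (simp add: Fmap_jacobian_eq owner_chosen_piece)

lemma det_Fmap_jacobian_block:
  assumes "e \<in> l"
  shows "det_on (chosen_pieces e \<times> {i}) (Fmap_jacobian c) = 1 + c / real R"
proof -
  have "det_on (chosen_pieces e \<times> {i}) (Fmap_jacobian c)
      = det_on (chosen_pieces e \<times> {i}) (\<lambda>x y. (if x = y then 1 else 0) + c * elen (fst x) / elen e)"
  proof (rule det_on_cong)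
    fix x y assume "x \<in> chosen_pieces e \<times> {i}" "y \<in> chosen_pieces e \<times> {i}"
    then obtain f f' where "x = (f, i)" "y = (f', i)" "f \<in> chosen_pieces e" "f' \<in> chosen_pieces e"
      by auto
    then show "Fmap_jacobian c x y = (if x = y then 1 else 0) + c * elen (fst x) / elen e"
      using Fmap_jacobian_chosen_pieces[OF assms \<open>f \<in> chosen_pieces e\<close>, of c i f' i] by simp
  qed
  also have "\<dots> = 1 + (\<Sum>x\<in>chosen_pieces e \<times> {i}. c * elen (fst x) / elen e)"
    by (rule det_on_identity_plus_rank_one) (simp add: finite_pieces)
  also have "(\<Sum>x\<in>chosen_pieces e \<times> {i}. c * elen (fst x) / elen e)
      = (\<Sum>f\<in>chosen_pieces e. c * elen f / elen e)"
    by (rule sum.reindex_bij_witness[of _ "\<lambda>f. (f, i)" fst]) auto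
  also have "\<dots> = c / elen e * (\<Sum>f\<in>chosen_pieces e. elen f)"
    by (simp add: sum_distrib_left)
  also have "\<dots> = c / real R"
    using sum_elen_chosen_pieces[OF assms] elen_pos[OF assms] by simp
  finally show ?thesis .
qed

lemma det_Fmap_jacobian:
  "det_on (m \<times> (UNIV :: 'n::finite set)) (Fmap_jacobian c) = (1 + c / real R) ^ (CARD('n) * card l)"
proof -
  let ?block = "\<lambda>k :: 'd edge \<times> 'n. chosen_pieces (fst k) \<times> {snd k}"
  have "det_on (m \<times> (UNIV :: 'n set)) (Fmap_jacobian c)
      = det_on (\<Union>k\<in>l \<times> (UNIV :: 'n set). ?block k) (Fmap_jacobian c)"
  proof (rule det_on_identity_outside)
    show "finite (m \<times> (UNIV :: 'n set))" using finite_m by simp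
    show "(\<Union>k\<in>l \<times> (UNIV :: 'n set). ?block k) \<subseteq> m \<times> UNIV" by (auto simp: pieces_def)
    show "Fmap_jacobian c x y = (if x = y then 1 else 0)"
      if "y \<in> m \<times> UNIV - (\<Union>k\<in>l \<times> (UNIV :: 'n set). ?block k)" for x y
    proof -
      obtain f i f' j where "x = (f, i)" "y = (f', j)" by fastforce
      moreover from this have "\<forall>e\<in>l. f' \<notin> chosen_pieces e" using that by auto
      ultimately show ?thesis by (simp add: Fmap_jacobian_outside_chosen_pieces)
    qed
  qed
  also have "\<dots> = (\<Prod>k\<in>l \<times> (UNIV :: 'n set). det_on (?block k) (Fmap_jacobian c))"
  proof (rule det_on_UN_block_diagonal)
    show "finite (l \<times> (UNIV :: 'n set))" using finite_l by simp
    show "\<And>k. finite (?block k)" using finite_pieces by simp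
    show "\<And>k k'. k \<in> l \<times> UNIV \<Longrightarrow> k' \<in> l \<times> UNIV \<Longrightarrow> k \<noteq> k' \<Longrightarrow> ?block k \<inter> ?block k' = {}"
      using chosen_pieces_disjoint by (auto simp: prod_eq_iff)
    show "\<And>k k' x y. k \<in> l \<times> UNIV \<Longrightarrow> k' \<in> l \<times> UNIV \<Longrightarrow> k \<noteq> k' \<Longrightarrow>
        x \<in> ?block k \<Longrightarrow> y \<in> ?block k' \<Longrightarrow> Fmap_jacobian c x y = 0"
      using chosen_pieces_disjoint by (auto simp: Fmap_jacobian_chosen_pieces prod_eq_iff)
  qed
  also have "\<dots> = (\<Prod>k\<in>l \<times> (UNIV :: 'n set). 1 + c / real R)"
    by (intro prod.cong refl) (auto simp: det_Fmap_jacobian_block)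
  finally show ?thesis by (simp add: card_cartesian_product mult.commute)
qed

lemma phiu_translate:
  fixes q \<xi> :: "('d,'n::finite) cfg"
  assumes "0 \<le> \<delta>" "q \<in> Gsp m"
    and path: "\<forall>t\<in>{0..1}. tadd m q (\<lambda>f. t *\<^sub>R Sml m l \<xi> f) \<in> Vt l m R ch \<delta>"
  shows "phiu l m R ch (tadd m q (Sml m l \<xi>))
       = (\<lambda>e. phiu l m R ch q e + (if e \<in> l then (1 / real R) *\<^sub>R \<xi> e else 0))"
proof -
  define \<xi>0 where "\<xi>0 = phiu l m R ch q"
  define a where "a = phi_lin (Sml m l \<xi>)"
  have a: "a e = (if e \<in> l then (1 / real R) *\<^sub>R \<xi> e else 0)" for e
    by (simp add: a_def phi_lin_Sml)
  have path_eq: "tadd m q (\<lambda>f. t *\<^sub>R Sml m l \<xi> f) = tcl m (\<lambda>f. q f + t *\<^sub>R Sml m l \<xi> f)" for t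
    by (simp add: tadd_def)
  have q: "q \<in> Vt l m R ch \<delta>"
    using path[rule_format, of 0] \<open>q \<in> Gsp m\<close> by (simp add: tadd_def tcl_Gsp)
  then have \<xi>0: "\<xi>0 \<in> Ubox l \<delta>" using phiu_in_Ubox(1)[OF _ \<open>0 \<le> \<delta>\<close>] by (simp add: \<xi>0_def)
  have phi_path:
    "phi l m R ch (tadd m q (\<lambda>f. t *\<^sub>R Sml m l \<xi> f)) = tcl l (\<lambda>e. \<xi>0 e + t *\<^sub>R a e)" for t
  proof -
    have "phi l m R ch (tadd m q (\<lambda>f. t *\<^sub>R Sml m l \<xi> f)) = tcl l (\<lambda>e. phi_lin q e + t *\<^sub>R a e)"
      by (simp add: path_eq phi_tcl phi_lin_add_scaleR a_def)
    also have "\<dots> = tcl l (\<lambda>e. \<xi>0 e + t *\<^sub>R a e)"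
      using phi_lin_minus_phiu_Ints[of q, unfolded tcl_Gsp[OF \<open>q \<in> Gsp m\<close>], OF q \<open>0 \<le> \<delta>\<close>]
      by (intro tcl_add_Ints) (simp add: \<xi>0_def)
    finally show ?thesis .
  qed
  have "(\<lambda>e. \<xi>0 e + a e) \<in> Ubox l 0"
  proof (rule Ubox_segment_endpoint[OF \<xi>0 \<open>0 \<le> \<delta>\<close>])
    show "\<forall>e. e \<notin> l \<longrightarrow> a e = 0" by (simp add: a)
    show "\<forall>t\<in>{0..1}. \<exists>\<zeta>\<in>Ubox l \<delta>. tcl l (\<lambda>e. \<xi>0 e + t *\<^sub>R a e) = tcl l \<zeta>"
      using path phi_path by (auto simp: Vt_iff)
  qed
  then show ?thesis
    using phiu_eqI phi_path[of 1] by (simp add: \<xi>0_def a)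
qed

lemma Fmap_translate:
  fixes q \<xi> :: "('d,'n::finite) cfg"
  assumes "h1 \<noteq> 0" "0 \<le> \<delta>" "q \<in> Gsp m"
    and path: "\<forall>t\<in>{0..1}. tadd m q (\<lambda>f. t *\<^sub>R Sml m l (\<lambda>e. h1 *\<^sub>R \<xi> e) f) \<in> Vt l m R ch \<delta>"
  shows "Fmap l m R ch h1 h (tadd m q (Sml m l (\<lambda>e. h1 *\<^sub>R \<xi> e)))
       = tadd m (Fmap l m R ch h1 h q) (Sml m l (\<lambda>e. h *\<^sub>R \<xi> e))"
proof -
  let ?S = "Sml m l (\<lambda>e. h1 *\<^sub>R \<xi> e)" and ?\<xi>0 = "phiu l m R ch q"
  have "Sml m l (\<lambda>e. ?\<xi>0 e + (if e \<in> l then (1 / real R) *\<^sub>R (h1 *\<^sub>R \<xi> e) else 0))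
      = (\<lambda>f. Sml m l ?\<xi>0 f + (h1 / real R) *\<^sub>R Sml m l \<xi> f)"
    by (simp add: Sml_add Sml_scaleR cong: Sml_cong)
  moreover have "h1 + shear h1 h * (h1 / real R) = h"
    using R_pos \<open>h1 \<noteq> 0\<close> by (simp add: shear_def field_simps)
  ultimately have "?S f + shear h1 h *\<^sub>R Sml m l (phiu l m R ch (tadd m q ?S)) f
      = shear h1 h *\<^sub>R Sml m l ?\<xi>0 f + Sml m l (\<lambda>e. h *\<^sub>R \<xi> e) f" for f
    unfolding phiu_translate[OF assms(2-4)]
    by (simp add: Sml_scaleR algebra_simps flip: scaleR_add_left)
  then show ?thesis
    by (simp add: tadd_def Fmap_eq tcl_add_tcl add.assoc)
qed

lemma abs_det_lift_partials:
  fixes g :: "('d,'n::finite) cfg \<Rightarrow> ('d,'n) cfg"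
  assumes "0 \<le> \<delta>" "h / h1 > 0" "openin (top_of_set (Wsp m)) U" "X \<in> U"
    and "\<forall>Y\<in>U. tcl m Y \<in> Vt l m R ch \<delta> \<and> tcl m (g Y) = Fmap l m R ch h1 h (tcl m Y)"
    and "has_partials m U g Dg"
  shows "\<bar>det_on (m \<times> (UNIV :: 'n set)) (\<lambda>(f, i) (f', j). Dg f' j X f $ i)\<bar>
           = (h / h1) ^ (CARD('n) * card l)"
proof -
  have "det_on (m \<times> (UNIV :: 'n set)) (\<lambda>(f, i) (f', j). Dg f' j X f $ i)
      = det_on (m \<times> (UNIV :: 'n set)) (Fmap_jacobian (shear h1 h))"
    using Fmap_partial_derivative[OF assms(1,3,4,5,6)]
    by (intro det_on_cong) (auto simp: Fmap_jacobian_def)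
  also have "\<dots> = (1 + shear h1 h / real R) ^ (CARD('n) * card l)"
    by (rule det_Fmap_jacobian)
  finally show ?thesis
    using one_plus_shear assms(2) by simp
qed

lemma Fmap_tdiffeo:
  assumes "h / h1 > 0" "0 \<le> \<delta>1" "0 \<le> \<delta>2" "h * (1 - \<delta>1) = h1 * (1 - \<delta>2)"
  shows "tdiffeo m (Vt l m R ch \<delta>1) (Vt l m R ch \<delta>2) (Fmap l m R ch h1 h :: ('d,'n::finite) cfg \<Rightarrow> _)"
  unfolding tdiffeo_def
proof (intro conjI)
  show "bij_betw (Fmap l m R ch h1 h) (Vt l m R ch \<delta>1) (Vt l m R ch \<delta>2)"
    by (rule Fmap_bij_betw(1)[OF assms])
  show "tsmooth_on m (Vt l m R ch \<delta>1) (Fmap l m R ch h1 h :: ('d,'n) cfg \<Rightarrow> _)"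
    by (rule Fmap_tsmooth_on[OF assms(2)])
  show "tsmooth_on m (Vt l m R ch \<delta>2)
      (inv_into (Vt l m R ch \<delta>1) (Fmap l m R ch h1 h :: ('d,'n) cfg \<Rightarrow> _))"
    by (rule tsmooth_on_cong[OF Fmap_bij_betw(2)[OF assms, symmetric] Fmap_tsmooth_on[OF assms(3)]])
qed

end

theorem mainTheorem14:
  fixes l m :: "('d::{finite,linorder}) edge set" and R :: nat
    and ch :: "'d edge \<Rightarrow> 'd edge"
    and h1 h \<delta>1 \<delta>2 :: real
  assumes "lattice l" and "lattice m" and "R > 0"
    and "subdiv (refine l R) m"
    and "\<forall>f\<in>m. \<exists>e\<in>refine l R. f \<in> pieces e m"
    and "\<forall>e\<in>l. ch e \<in> pieces e (refine l R)"
    and "h1 \<in> {-1..1}" and "h1 \<noteq> 0" and "h \<in> {-1..1}" and "sgn h = sgn h1"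
    and "\<delta>1 \<in> {0<..<1}" and "\<delta>2 \<in> {0<..<1}" and "h * (1 - \<delta>1) = h1 * (1 - \<delta>2)"
  shows "tdiffeo m (Vt l m R ch \<delta>1) (Vt l m R ch \<delta>2)
           (Fmap l m R ch h1 h :: ('d,'n::finite) cfg \<Rightarrow> ('d,'n) cfg)
       \<and> (\<forall>X U g Dg. X \<in> U \<and> openin (top_of_set (Wsp m)) U
            \<and> (\<forall>Y\<in>U. tcl m Y \<in> Vt l m R ch \<delta>1 \<and> tcl m (g Y) = Fmap l m R ch h1 h (tcl m Y))
            \<and> Ck 0 m U g \<and> has_partials m U g Dg
            \<longrightarrow> \<bar>det_on (m \<times> (UNIV :: 'n set)) (\<lambda>(f, i) (f', j). Dg f' j X f $ i)\<bar>
                = (h / h1) ^ (CARD('n) * card l))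
       \<and> (\<forall>(q :: ('d,'n) cfg) \<xi>. q \<in> Gsp m
            \<and> (\<forall>t\<in>{0..1}. tadd m q (\<lambda>f. t *\<^sub>R Sml m l (\<lambda>e. h1 *\<^sub>R \<xi> e) f) \<in> Vt l m R ch \<delta>1)
            \<longrightarrow> Fmap l m R ch h1 h (tadd m q (Sml m l (\<lambda>e. h1 *\<^sub>R \<xi> e)))
                = tadd m (Fmap l m R ch h1 h q) (Sml m l (\<lambda>e. h *\<^sub>R \<xi> e)))"
proof -
  \<comment> \<open>Edges of m that are not pieces of l^R would be harmless (F fixes their coordinates), and
    the bounds on h, h1, \<delta>1, \<delta>2 are only used through h / h1 > 0 and \<delta>1, \<delta>2 \<ge> 0.\<close>
  interpret refined_lattice l m R ch
    using assms by unfold_locales auto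
  have ratio: "h / h1 > 0"
    using \<open>sgn h = sgn h1\<close> \<open>h1 \<noteq> 0\<close>
    by (auto simp: sgn_if zero_less_divide_iff split: if_splits)
  have \<delta>: "0 \<le> \<delta>1" "0 \<le> \<delta>2" using assms by auto
  show ?thesis
    using Fmap_tdiffeo[OF ratio \<delta> \<open>h * (1 - \<delta>1) = h1 * (1 - \<delta>2)\<close>]
      abs_det_lift_partials[OF \<delta>(1) ratio] Fmap_translate[OF \<open>h1 \<noteq> 0\<close> \<delta>(1)]
    by (intro conjI allI impI; (elim conjE)?) blast+
qed

end
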